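(* Let $t$ be a positive integer. For every finite chordal trigraph $H$ whose total graph $\mathcal T(H)$ has clique number at most $t+1$ and whose real graph is triangle-free, every set $X\subseteq V(G'_t)$ such that $G'_t[X]$ is $H$-free, and every $u\in V(G'_t)$, there exists a downward path $P_u$ from $u$ in $T'_t$ with $|V(P_u)\cap X|\le|V(H)|-1$.
   Context: A trigraph is $(V,E_B,E_R)$ with disjoint sets $E_B$ (black edges) and $E_R$ (red edges); adjacency type of a pair is black, red or non-edge. Total graph: $(V,E_B\cup E_R)$; real graph: $(V,E_B)$; chordal if the total graph is chordal. $G[X]$ denotes the induced subtrigraph; $G$ is $H$-free if no induced subtrigraph of $G$ is isomorphic to $H$ (isomorphism preserving adjacency types). Construction of $G'_t$, $T'_t$: a countably infinite trigraph $G'_t$ and rooted tree $T'_t$ on the same vertex set, partitioned into finite layers $L_0,L_1,\dots$ each inducing a left-to-right path of black edges. $L_0$ is a single vertex, the root. With $L_{\le i}=L_0\cup\dots\cup L_i$, layer $L_{i+1}$ is built (starting empty) as follows: for each $u\in L_i$ from left to right, let $N^\uparrow[u]:=(N_{\mathcal T(G'_t)}(u)\cap L_{\le i-1})\cup\{u\}$ and let $\mathcal B$ be the set of subsets of $N^\uparrow[u]$ all of whose pairs are red edges. For every ordered pair $(B,R)$ of disjoint subsets of $N^\uparrow[u]$ with $B\in\mathcal B$ and $|B\cup R|\le t$: append a new vertex $v_{B,R}$ at the right end of $L_{i+1}$ (black edge to the previously rightmost vertex of $L_{i+1}$, if any), make it a child of $u$, add black edges from $v_{B,R}$ to all of $B$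 and red edges to all of $R$; then append another new vertex $v'_{B,R}$ at the right end of $L_{i+1}$ (black edge to the previously rightmost vertex) and make it a child of $u$, with no further edges. A downward path from $u$ in $T'_t$ is an infinite path $u_1u_2\dots$ in $T'_t$ with $u_1=u$ and each $u_i$ ($i>1$) a child of $u_{i-1}$. *)

theory Defs
  imports Main
begin

definition trigraph :: "'a set \<Rightarrow> 'a set set \<Rightarrow> 'a set set \<Rightarrow> bool" where
  "trigraph V EB ER \<longleftrightarrow> EB \<inter> ER = {} \<and>
     (\<forall>e \<in> EB \<union> ER. \<exists>x y. x \<noteq> y \<and> x \<in> V \<and> y \<in> V \<and> e = {x, y})"

definition induced_long_cycle :: "'a set \<Rightarrow> 'a set set \<Rightarrow> 'a list \<Rightarrow> bool" where
  "induced_long_cycle V E xs \<longleftrightarrow> length xs \<ge> 4 \<and> distinct xs \<and> set xs \<subseteq> V \<and>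
     (\<forall>i < length xs. \<forall>j < length xs. i \<noteq> j \<longrightarrow>
        ({xs ! i, xs ! j} \<in> E \<longleftrightarrow> (j = Suc i mod length xs \<or> i = Suc j mod length xs)))"

definition chordal_graph :: "'a set \<Rightarrow> 'a set set \<Rightarrow> bool" where
  "chordal_graph V E \<longleftrightarrow> \<not> (\<exists>xs. induced_long_cycle V E xs)"

definition chordal_trigraph :: "'a set \<Rightarrow> 'a set set \<Rightarrow> 'a set set \<Rightarrow> bool" where
  "chordal_trigraph V EB ER \<longleftrightarrow> chordal_graph V (EB \<union> ER)"

definition clique_number_le :: "'a set \<Rightarrow> 'a set set \<Rightarrow> nat \<Rightarrow> bool" where
  "clique_number_le V E k \<longleftrightarrow>
     (\<forall>K \<subseteq> V. (\<forall>x\<in>K. \<forall>y\<in>K. x \<noteq> y \<longrightarrow> {x, y} \<in> E) \<longrightarrow> finite K \<and> card K \<le> k)"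

definition triangle_free :: "'a set \<Rightarrow> 'a set set \<Rightarrow> bool" where
  "triangle_free V E \<longleftrightarrow> \<not> (\<exists>x y z. x \<in> V \<and> y \<in> V \<and> z \<in> V \<and> distinct [x, y, z] \<and>
      {x, y} \<in> E \<and> {y, z} \<in> E \<and> {x, z} \<in> E)"

definition contains_induced ::
  "'h set \<Rightarrow> 'h set set \<Rightarrow> 'h set set \<Rightarrow> 'v set \<Rightarrow> 'v set set \<Rightarrow> 'v set set \<Rightarrow> bool" where
  "contains_induced VH EBH ERH X EB ER \<longleftrightarrow>
     (\<exists>f. inj_on f VH \<and> f ` VH \<subseteq> X \<and>
        (\<forall>a\<in>VH. \<forall>b\<in>VH. a \<noteq> b \<longrightarrow>
           ({f a, f b} \<in> EB \<longleftrightarrow> {a, b} \<in> EBH) \<and> ({f a, f b} \<in> ER \<longleftrightarrow> {a, b} \<in> ERH)))"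

definition H_free_on ::
  "'h set \<Rightarrow> 'h set set \<Rightarrow> 'h set set \<Rightarrow> 'v set \<Rightarrow> 'v set set \<Rightarrow> 'v set set \<Rightarrow> bool" where
  "H_free_on VH EBH ERH X EB ER \<longleftrightarrow> \<not> contains_induced VH EBH ERH X EB ER"

text \<open>
  Data:
  \<^item> Ls i : the layer L_i, as a list ordered from left to right;
  \<^item> par w : the parent in T'_t of a non-root vertex w;
  \<^item> lab w = (B, R, primed) : vertex w is v_{B,R} (primed = False) or v'_{B,R} (primed = True);
  \<^item> EB, ER : black and red edges of G'_t.
  The order in which the pairs (B,R) are processed for a given u is not fixed in the
  paper, so any enumeration order is allowed (existentially chosen per layer).\<close>

definition layers_upto :: "(nat \<Rightarrow> 'v list) \<Rightarrow> nat \<Rightarrow> 'v set" where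
  "layers_upto Ls i = (\<Union>j\<le>i. set (Ls j))"

definition Nup :: "(nat \<Rightarrow> 'v list) \<Rightarrow> 'v set set \<Rightarrow> 'v set set \<Rightarrow> nat \<Rightarrow> 'v \<Rightarrow> 'v set" where
  "Nup Ls EB ER i u = {u} \<union> {x. (\<exists>j<i. x \<in> set (Ls j)) \<and> {u, x} \<in> EB \<union> ER}"

definition admissible ::
  "nat \<Rightarrow> (nat \<Rightarrow> 'v list) \<Rightarrow> 'v set set \<Rightarrow> 'v set set \<Rightarrow> nat \<Rightarrow> 'v \<Rightarrow> ('v set \<times> 'v set) set" where
  "admissible t Ls EB ER i u =
     {(B, R). B \<subseteq> Nup Ls EB ER i u \<and> R \<subseteq> Nup Ls EB ER i u \<and> B \<inter> R = {} \<and>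
              (\<forall>x\<in>B. \<forall>y\<in>B. x \<noteq> y \<longrightarrow> {x, y} \<in> ER) \<and>
              card (B \<union> R) \<le> t}"

definition Gt_construction ::
  "nat \<Rightarrow> 'v set \<Rightarrow> 'v \<Rightarrow> (nat \<Rightarrow> 'v list) \<Rightarrow> ('v \<Rightarrow> 'v) \<Rightarrow> ('v \<Rightarrow> 'v set \<times> 'v set \<times> bool)
     \<Rightarrow> 'v set set \<Rightarrow> 'v set set \<Rightarrow> bool" where
  "Gt_construction t V root Ls par lab EB ER \<longleftrightarrow>
     Ls 0 = [root] \<and>
     (\<forall>i. distinct (Ls i)) \<and>
     (\<forall>i j. i \<noteq> j \<longrightarrow> set (Ls i) \<inter> set (Ls j) = {}) \<and>
     V = (\<Union>i. set (Ls i)) \<and>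
     EB = {{Ls i ! k, Ls i ! Suc k} | i k. Suc k < length (Ls i)}
          \<union> {{w, b} | w b. \<exists>i B R. w \<in> set (Ls (Suc i)) \<and> lab w = (B, R, False) \<and> b \<in> B} \<and>
     ER = {{w, r} | w r. \<exists>i B R. w \<in> set (Ls (Suc i)) \<and> lab w = (B, R, False) \<and> r \<in> R} \<and>
     (\<forall>i. \<exists>enum :: 'v \<Rightarrow> ('v set \<times> 'v set) list.
        (\<forall>u \<in> set (Ls i). distinct (enum u) \<and> set (enum u) = admissible t Ls EB ER i u) \<and>
        map (\<lambda>w. (par w, lab w)) (Ls (Suc i)) =
          concat (map (\<lambda>u. concat (map (\<lambda>(B, R). [(u, (B, R, False)), (u, (B, R, True))])
                                       (enum u))) (Ls i)))"

definition downward_path :: "'v set \<Rightarrow> 'v \<Rightarrow> ('v \<Rightarrow> 'v) \<Rightarrow> 'v \<Rightarrow> (nat \<Rightarrow> 'v) \<Rightarrow> bool" where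
  "downward_path V root par u p \<longleftrightarrow>
     p 0 = u \<and> (\<forall>n. p (Suc n) \<in> V \<and> p (Suc n) \<noteq> root \<and> par (p (Suc n)) = p n)"

end

theory Submission
  imports Defs
begin

text \<open>
  Embed \<open>H\<close> greedily along \<open>T'_t\<close>. At a vertex \<open>c\<close> a clique \<open>K\<close> of \<open>H\<close> is already mapped
  into \<open>X \<inter> N\<^sup>\<up>[c]\<close>, and a set \<open>S\<close> of vertices with all neighbours in \<open>K \<union> S\<close> remains. By
  chordality every component of \<open>H[S]\<close> has a vertex \<open>h\<close> adjacent to all of its neighbours in \<open>K\<close>.
  As the real graph of \<open>H\<close> is triangle-free and \<open>\<omega>(H) \<le> t + 1\<close>, the black and red neighbours
  \<open>B, R\<close> of \<open>h\<close> in \<open>K\<close> give an admissible pair \<open>(g B, g R)\<close>, so \<open>c\<close> has a child \<open>w = v_{g B, g R}\<close>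
  that sees \<open>g K\<close> exactly as \<open>h\<close> sees \<open>K\<close>. Components with equal pairs are embedded in the subtree
  of the same \<open>w\<close> (with \<open>h \<mapsto> w\<close> if \<open>w \<in> X\<close>), and subtrees of distinct such children are
  anticomplete, since the primed children separate them within every layer.

  By induction on \<open>|S|\<close>: if every downward path from \<open>c\<close> meets \<open>X\<close> at least \<open>|S|\<close> times below \<open>c\<close>,
  the embedding can be completed, for otherwise some child \<open>w \<notin> X\<close> is again a failing state with
  the same \<open>S\<close>, and iterating gives a downward path avoiding \<open>X\<close>. Starting at \<open>u\<close>, an
  \<open>H\<close>-free \<open>G'_t[X]\<close> thus forces a downward path meeting \<open>X\<close> at most \<open>|V(H)| - 1\<close> times.
\<close>

lemma last_take_Suc: "i < length xs \<Longrightarrow> last (take (Suc i) xs) = xs ! i"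
  by (simp add: take_Suc_conv_app_nth)

lemma nth_concat_map_pair:
  "k < 2 * length zs \<Longrightarrow> concat (map (\<lambda>z. [p z, q z]) zs) ! k =
     (if even k then p (zs ! (k div 2)) else q (zs ! (k div 2)))"
proof (induction zs arbitrary: k)
  case (Cons z zs)
  show ?case
  proof (cases k)
    case (Suc k1)
    then show ?thesis
      using Cons by (cases k1) auto
  qed simp
qed simp

lemma length_concat_map_pair: "length (concat (map (\<lambda>z. [p z, q z]) zs)) = 2 * length zs"
  by (induction zs) auto

lemma concat_map_Pair_nth_Suc:
  assumes "\<forall>x\<in>set xs. e x \<noteq> []"
    and "Suc m < length (concat (map (\<lambda>u. map (Pair u) (e u)) xs))"
  shows "fst (concat (map (\<lambda>u. map (Pair u) (e u)) xs) ! m) =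
      fst (concat (map (\<lambda>u. map (Pair u) (e u)) xs) ! Suc m) \<or>
    (\<exists>p. Suc p < length xs \<and> fst (concat (map (\<lambda>u. map (Pair u) (e u)) xs) ! m) = xs ! p \<and>
      fst (concat (map (\<lambda>u. map (Pair u) (e u)) xs) ! Suc m) = xs ! Suc p)"
  using assms
proof (induction xs arbitrary: m)
  case (Cons x xs)
  define ys where "ys = concat (map (\<lambda>u. map (Pair u) (e u)) xs)"
  have eq: "concat (map (\<lambda>u. map (Pair u) (e u)) (x # xs)) = map (Pair x) (e x) @ ys"
    by (simp add: ys_def)
  consider "Suc m < length (e x)" | "Suc m = length (e x)" | "length (e x) \<le> m"
    by linarith
  then show ?case
  proof cases
    case 1
    then show ?thesis unfolding eq by (simp add: nth_append)
  next
    case 2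
    then have "ys \<noteq> []" using Cons.prems(2) unfolding eq by auto
    then obtain x2 xs2 where xs: "xs = x2 # xs2" unfolding ys_def by (cases xs) auto
    have "e x2 \<noteq> []" using Cons.prems xs by simp
    then have "fst (ys ! 0) = x2" unfolding ys_def xs by (cases "e x2") auto
    then show ?thesis unfolding eq using xs 2
      by (intro disjI2 exI[of _ 0]) (auto simp: nth_append)
  next
    case 3
    have "Suc (m - length (e x)) < length ys" using Cons.prems(2) 3 unfolding eq by simp
    then have "fst (ys ! (m - length (e x))) = fst (ys ! Suc (m - length (e x))) \<or>
      (\<exists>p. Suc p < length xs \<and> fst (ys ! (m - length (e x))) = xs ! p \<and>
        fst (ys ! Suc (m - length (e x))) = xs ! Suc p)"
      using Cons.IH Cons.prems(1) unfolding ys_def by simp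
    moreover have "(map (Pair x) (e x) @ ys) ! m = ys ! (m - length (e x))"
      "(map (Pair x) (e x) @ ys) ! Suc m = ys ! Suc (m - length (e x))"
      using 3 by (simp_all add: nth_append Suc_diff_le)
    ultimately show ?thesis unfolding eq
      by (metis Suc_less_eq length_Cons nth_Cons_Suc)
  qed
qed simp

lemma concat_map_concat_pairs:
  "concat (map (\<lambda>u. concat (map (\<lambda>(B, R). [(u, (B, R, False)), (u, (B, R, True))]) (e u))) xs) =
   concat (map (\<lambda>z. [(fst z, (fst (snd z), snd (snd z), False)), (fst z, (fst (snd z), snd (snd z), True))])
     (concat (map (\<lambda>u. map (Pair u) (e u)) xs)))"
  by (induction xs) (auto simp: map_concat comp_def case_prod_beta)

section \<open>Layers and edges of \<open>G'_t\<close>\<close>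

locale gt_construction =
  fixes t :: nat and V :: "'v set" and root :: 'v and Ls :: "nat \<Rightarrow> 'v list" and par :: "'v \<Rightarrow> 'v"
    and lab :: "'v \<Rightarrow> 'v set \<times> 'v set \<times> bool" and EB ER :: "'v set set"
  assumes construction: "Gt_construction t V root Ls par lab EB ER"
begin

abbreviation black_lab :: "'v \<Rightarrow> 'v set" where "black_lab w \<equiv> fst (lab w)"
abbreviation red_lab :: "'v \<Rightarrow> 'v set" where "red_lab w \<equiv> fst (snd (lab w))"
abbreviation primed :: "'v \<Rightarrow> bool" where "primed w \<equiv> snd (snd (lab w))"

lemma Ls_0: "Ls 0 = [root]"
  using construction by (simp add: Gt_construction_def)

lemma layers_disjoint: "i \<noteq> j \<Longrightarrow> set (Ls i) \<inter> set (Ls j) = {}"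
  using construction by (simp add: Gt_construction_def)

lemma V_eq: "V = (\<Union>i. set (Ls i))"
  using construction by (simp add: Gt_construction_def)

lemma EB_eq: "EB = {{Ls i ! k, Ls i ! Suc k} | i k. Suc k < length (Ls i)}
    \<union> {{w, b} | w b. \<exists>i B R. w \<in> set (Ls (Suc i)) \<and> lab w = (B, R, False) \<and> b \<in> B}"
  using construction by (simp add: Gt_construction_def)

lemma ER_eq: "ER = {{w, r} | w r. \<exists>i B R. w \<in> set (Ls (Suc i)) \<and> lab w = (B, R, False) \<and> r \<in> R}"
  using construction by (simp add: Gt_construction_def)

abbreviation enumerates :: "(nat \<Rightarrow> 'v \<Rightarrow> ('v set \<times> 'v set) list) \<Rightarrow> nat \<Rightarrow> bool" where
  "enumerates E i \<equiv> (\<forall>u \<in> set (Ls i). distinct (E i u) \<and> set (E i u) = admissible t Ls EB ER i u) \<and>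
     map (\<lambda>w. (par w, lab w)) (Ls (Suc i)) =
       concat (map (\<lambda>u. concat (map (\<lambda>(B, R). [(u, (B, R, False)), (u, (B, R, True))]) (E i u)))
         (Ls i))"

definition enum :: "nat \<Rightarrow> 'v \<Rightarrow> ('v set \<times> 'v set) list" where
  "enum = (SOME E. \<forall>i. enumerates E i)"

lemma enumerates_enum: "enumerates enum i"
proof -
  have "\<forall>i. \<exists>E. enumerates (\<lambda>_. E) i"
    using construction unfolding Gt_construction_def by (elim conjE) assumption
  then have "\<exists>E. \<forall>i. enumerates E i"
    by (rule choice)
  then show ?thesis
    unfolding enum_def by (rule someI2_ex) blast
qed

lemma set_enum: "u \<in> set (Ls i) \<Longrightarrow> set (enum i u) = admissible t Ls EB ER i u"
  using enumerates_enum by blast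

text \<open>The pairs \<open>(u, (B, R))\<close> in the order in which layer \<open>i + 1\<close> is built; its vertices
  \<open>2 m\<close> and \<open>2 m + 1\<close> are \<open>v_{B,R}\<close> and \<open>v'_{B,R}\<close> for the \<open>m\<close>-th pair.\<close>
definition slots :: "nat \<Rightarrow> ('v \<times> 'v set \<times> 'v set) list" where
  "slots i = concat (map (\<lambda>u. map (Pair u) (enum i u)) (Ls i))"

lemma map_par_lab_next_layer:
  "map (\<lambda>w. (par w, lab w)) (Ls (Suc i)) =
     concat (map (\<lambda>z. [(fst z, (fst (snd z), snd (snd z), False)), (fst z, (fst (snd z), snd (snd z), True))])
       (slots i))"
  using enumerates_enum[of i] unfolding slots_def concat_map_concat_pairs by blast

lemma length_next_layer: "length (Ls (Suc i)) = 2 * length (slots i)"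
  using arg_cong[OF map_par_lab_next_layer[of i], of length]
  by (simp add: length_concat_map_pair)

lemma nth_next_layer:
  assumes "k < length (Ls (Suc i))"
  shows "par (Ls (Suc i) ! k) = fst (slots i ! (k div 2))"
    and "lab (Ls (Suc i) ! k) = (fst (snd (slots i ! (k div 2))), snd (snd (slots i ! (k div 2))), odd k)"
proof -
  have "(par (Ls (Suc i) ! k), lab (Ls (Suc i) ! k)) = map (\<lambda>w. (par w, lab w)) (Ls (Suc i)) ! k"
    using assms by simp
  also have "\<dots> = (fst (slots i ! (k div 2)),
      (fst (snd (slots i ! (k div 2))), snd (snd (slots i ! (k div 2))), odd k))"
    unfolding map_par_lab_next_layer
    using assms length_next_layer by (subst nth_concat_map_pair) auto
  finally show "par (Ls (Suc i) ! k) = fst (slots i ! (k div 2))"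
    "lab (Ls (Suc i) ! k) = (fst (snd (slots i ! (k div 2))), snd (snd (slots i ! (k div 2))), odd k)"
    by simp_all
qed

lemma enum_nonempty: "enum i u \<noteq> []" if "u \<in> set (Ls i)"
proof -
  have "({}, {}) \<in> admissible t Ls EB ER i u"
    by (simp add: admissible_def Nup_def)
  then show ?thesis
    using set_enum[OF that] by force
qed

lemma set_slots: "set (slots i) = {(u, BR). u \<in> set (Ls i) \<and> BR \<in> admissible t Ls EB ER i u}"
  unfolding slots_def using set_enum by auto

definition level :: "'v \<Rightarrow> nat" where
  "level x = (SOME i. x \<in> set (Ls i))"

lemma level_eq: "x \<in> set (Ls i) \<Longrightarrow> level x = i"
  unfolding level_def by (rule some_equality) (use layers_disjoint in blast)+

lemma in_V: "x \<in> set (Ls i) \<Longrightarrow> x \<in> V"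
  using V_eq by blast

lemma in_layer_level: "x \<in> V \<Longrightarrow> x \<in> set (Ls (level x))"
  using V_eq level_eq by blast

lemma parent_in_layer: "w \<in> set (Ls (Suc i)) \<Longrightarrow> par w \<in> set (Ls i)"
  and label_admissible:
    "w \<in> set (Ls (Suc i)) \<Longrightarrow> (black_lab w, red_lab w) \<in> admissible t Ls EB ER i (par w)"
proof -
  assume "w \<in> set (Ls (Suc i))"
  then obtain k where k: "k < length (Ls (Suc i))" "w = Ls (Suc i) ! k"
    by (auto simp: in_set_conv_nth)
  then have "slots i ! (k div 2) \<in> set (slots i)"
    using length_next_layer by simp
  then show "par w \<in> set (Ls i)" "(black_lab w, red_lab w) \<in> admissible t Ls EB ER i (par w)"
    using nth_next_layer[OF k(1)] k(2) set_slots by auto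
qed

lemma child_exists:
  assumes "u \<in> set (Ls i)" "(B, R) \<in> admissible t Ls EB ER i u"
  shows "\<exists>w \<in> set (Ls (Suc i)). par w = u \<and> lab w = (B, R, False)"
proof -
  obtain m where m: "m < length (slots i)" "slots i ! m = (u, (B, R))"
    using assms set_slots by (force simp: in_set_conv_nth)
  then have m2: "2 * m < length (Ls (Suc i))"
    using length_next_layer by simp
  moreover have "par (Ls (Suc i) ! (2 * m)) = u" "lab (Ls (Suc i) ! (2 * m)) = (B, R, False)"
    using nth_next_layer[OF m2] m by auto
  ultimately show ?thesis
    by (metis nth_mem)
qed

lemma primed_nth_next_layer:
  "k < length (Ls (Suc i)) \<Longrightarrow> primed (Ls (Suc i) ! k) \<longleftrightarrow> odd k"
  using nth_next_layer(2) by simp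

lemma parents_of_neighbours:
  assumes "Suc k < length (Ls (Suc i))"
  shows "par (Ls (Suc i) ! k) = par (Ls (Suc i) ! Suc k) \<or>
    (\<exists>m. Suc m < length (Ls i) \<and> par (Ls (Suc i) ! k) = Ls i ! m \<and> par (Ls (Suc i) ! Suc k) = Ls i ! Suc m)"
proof (cases "even k")
  case True
  then have "Suc k div 2 = k div 2" by presburger
  then show ?thesis using nth_next_layer(1)[of k i] nth_next_layer(1)[OF assms] assms by simp
next
  case False
  then have e: "Suc k div 2 = Suc (k div 2)" by presburger
  have "Suc (k div 2) < length (slots i)" using assms length_next_layer[of i] False by presburger
  then have "fst (slots i ! (k div 2)) = fst (slots i ! Suc (k div 2)) \<or>
      (\<exists>p. Suc p < length (Ls i) \<and> fst (slots i ! (k div 2)) = Ls i ! p \<and>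
        fst (slots i ! Suc (k div 2)) = Ls i ! Suc p)"
    unfolding slots_def by (intro concat_map_Pair_nth_Suc) (use enum_nonempty in auto)
  then show ?thesis using nth_next_layer(1)[of k i] nth_next_layer(1)[OF assms] assms e by simp
qed

lemma Nup_level:
  assumes "u \<in> set (Ls i)" "x \<in> Nup Ls EB ER i u"
  shows "x \<in> V" "level x \<le> i"
  using assms in_V level_eq unfolding Nup_def by fastforce+

lemma label_level:
  assumes "w \<in> set (Ls (Suc i))" "x \<in> black_lab w \<union> red_lab w"
  shows "x \<in> V" "level x \<le> i"
  using label_admissible[OF assms(1)] assms(2) Nup_level[OF parent_in_layer[OF assms(1)]]
  unfolding admissible_def by blast+

lemma black_edge_up_iff:
  assumes "y \<in> set (Ls (Suc i))" "\<not> primed y" "level x < level y"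
  shows "{x, y} \<in> EB \<longleftrightarrow> x \<in> black_lab y"
proof
  assume "{x, y} \<in> EB"
  then consider (horizontal) j k where "Suc k < length (Ls j)" "{x, y} = {Ls j ! k, Ls j ! Suc k}"
    | (label) w b j B R where "{x, y} = {w, b}" "w \<in> set (Ls (Suc j))" "lab w = (B, R, False)" "b \<in> B"
    unfolding EB_eq by blast
  then show "x \<in> black_lab y"
  proof cases
    case horizontal
    then have "x \<in> set (Ls j)" "y \<in> set (Ls j)"
      by (metis Suc_lessD doubleton_eq_iff nth_mem)+
    then show ?thesis using assms(3) level_eq by simp
  next
    case label
    then have "level b < level w"
      using label_level[of w j b] level_eq by simp
    then have "x = b \<and> y = w" using label assms(3) by (auto simp: doubleton_eq_iff)
    then show ?thesis using label by simp
  qed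
next
  assume "x \<in> black_lab y"
  moreover have "lab y = (black_lab y, red_lab y, False)"
    using assms(2) by (cases "lab y") auto
  ultimately have "{y, x} \<in> {{w, b} | w b. \<exists>i B R. w \<in> set (Ls (Suc i)) \<and> lab w = (B, R, False) \<and> b \<in> B}"
    using assms(1) by blast
  then show "{x, y} \<in> EB"
    unfolding EB_eq by (auto simp: insert_commute)
qed

lemma red_edge_up_iff:
  assumes "y \<in> set (Ls (Suc i))" "\<not> primed y" "level x < level y"
  shows "{x, y} \<in> ER \<longleftrightarrow> x \<in> red_lab y"
proof
  assume "{x, y} \<in> ER"
  then obtain w r j B R where h: "{x, y} = {w, r}" "w \<in> set (Ls (Suc j))" "lab w = (B, R, False)" "r \<in> R"
    unfolding ER_eq by blast
  then have "level r < level w"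
    using label_level[of w j r] level_eq by simp
  then have "x = r \<and> y = w" using h assms(3) by (auto simp: doubleton_eq_iff)
  then show "x \<in> red_lab y" using h by simp
next
  assume "x \<in> red_lab y"
  moreover have "lab y = (black_lab y, red_lab y, False)"
    using assms(2) by (cases "lab y") auto
  ultimately have "{y, x} \<in> ER"
    unfolding ER_eq using assms(1) by blast
  then show "{x, y} \<in> ER" by (simp add: insert_commute)
qed

lemma edge_cases:
  assumes "{x, y} \<in> EB \<union> ER"
  obtains (horizontal) i k where "Suc k < length (Ls i)" "{x, y} = {Ls i ! k, Ls i ! Suc k}"
      "level x = i" "level y = i"
  | (up) i where "level x < level y" "y \<in> set (Ls (Suc i))" "x \<in> black_lab y \<union> red_lab y"
  | (down) i where "level y < level x" "x \<in> set (Ls (Suc i))" "y \<in> black_lab x \<union> red_lab x"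
proof -
  consider (horizontal) i k where "Suc k < length (Ls i)" "{x, y} = {Ls i ! k, Ls i ! Suc k}"
    | (label) w b i B R where "{x, y} = {w, b}" "w \<in> set (Ls (Suc i))" "lab w = (B, R, False)" "b \<in> B \<union> R"
    using assms unfolding EB_eq ER_eq by blast
  then show thesis
  proof cases
    case horizontal
    then have "x \<in> set (Ls i)" "y \<in> set (Ls i)"
      by (metis Suc_lessD doubleton_eq_iff nth_mem)+
    then show thesis using that(1) horizontal level_eq by blast
  next
    case label
    then have "level b < level w"
      using label_level[of w i b] level_eq by simp
    then show thesis using label that(2,3) by (auto simp: doubleton_eq_iff)
  qed
qed

lemma Nup_ancestor: "u \<in> set (Ls i) \<Longrightarrow> x \<in> Nup Ls EB ER i u \<Longrightarrow> x = (par ^^ (i - level x)) u"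
proof (induction i arbitrary: u)
  case 0
  then show ?case unfolding Nup_def by auto
next
  case (Suc i)
  show ?case
  proof (cases "x = u")
    case True then show ?thesis using Suc.prems level_eq by simp
  next
    case False
    then obtain j where j: "j < Suc i" "x \<in> set (Ls j)" "{x, u} \<in> EB \<union> ER"
      using Suc.prems(2) unfolding Nup_def by (auto simp: insert_commute)
    have lx: "level x = j" and lu: "level u = Suc i"
      using j Suc.prems level_eq by simp_all
    have "x \<in> black_lab u \<union> red_lab u"
      using j(3) by (cases rule: edge_cases) (use lx lu j(1) level_eq in auto)
    then have "x \<in> Nup Ls EB ER i (par u)"
      using label_admissible[OF Suc.prems(1)] unfolding admissible_def by auto
    then have "x = (par ^^ (i - j)) (par u)"
      using Suc.IH[OF parent_in_layer[OF Suc.prems(1)]] lx by simp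
    also have "\<dots> = (par ^^ (Suc i - j)) u" using j(1)
      by (simp add: Suc_diff_le funpow_Suc_right del: funpow.simps)
    finally show ?thesis using lx by simp
  qed
qed

lemma ancestors_of_neighbours:
  assumes "Suc k < length (Ls j)" "d \<le> j"
  shows "(par ^^ d) (Ls j ! k) = (par ^^ d) (Ls j ! Suc k) \<or>
    (\<exists>m. Suc m < length (Ls (j - d)) \<and> (par ^^ d) (Ls j ! k) = Ls (j - d) ! m \<and>
      (par ^^ d) (Ls j ! Suc k) = Ls (j - d) ! Suc m)"
  using assms(2)
proof (induction d)
  case (Suc d)
  then have "(par ^^ d) (Ls j ! k) = (par ^^ d) (Ls j ! Suc k) \<or>
    (\<exists>m. Suc m < length (Ls (Suc (j - Suc d))) \<and> (par ^^ d) (Ls j ! k) = Ls (Suc (j - Suc d)) ! m \<and>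
      (par ^^ d) (Ls j ! Suc k) = Ls (Suc (j - Suc d)) ! Suc m)"
    by (simp add: Suc_diff_Suc)
  then show ?case
    using parents_of_neighbours by fastforce
qed (use assms(1) in auto)

definition in_subtree :: "'v \<Rightarrow> 'v \<Rightarrow> bool" where
  "in_subtree w y \<longleftrightarrow> y \<in> V \<and> level w \<le> level y \<and> (par ^^ (level y - level w)) y = w"

lemma in_subtree_refl: "w \<in> V \<Longrightarrow> in_subtree w w"
  unfolding in_subtree_def by simp

lemma subtrees_no_edge_across_levels:
  assumes "level w1 = level w2" "w1 \<noteq> w2" "in_subtree w1 y" "in_subtree w2 z" "level y < level z"
  shows "{y, z} \<notin> EB \<union> ER"
proof
  assume "{y, z} \<in> EB \<union> ER"
  then obtain i where i: "z \<in> set (Ls (Suc i))" "y \<in> black_lab z \<union> red_lab z"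
    by (cases rule: edge_cases) (use assms(5) in auto)
  have lz: "level z = Suc i" using i level_eq by simp
  have "y \<in> Nup Ls EB ER i (par z)"
    using label_admissible[OF i(1)] i(2) unfolding admissible_def by auto
  then have "y = (par ^^ (i - level y)) (par z)"
    using Nup_ancestor parent_in_layer[OF i(1)] by blast
  also have "\<dots> = (par ^^ (level z - level y)) z" using lz assms(5)
    by (simp add: Suc_diff_le funpow_Suc_right del: funpow.simps)
  finally have yz: "y = (par ^^ (level z - level y)) z" .
  have "w1 = (par ^^ (level y - level w1)) y" using assms(3) unfolding in_subtree_def by simp
  also have "\<dots> = (par ^^ (level y - level w1 + (level z - level y))) z" using yz by (simp add: funpow_add)
  also have "level y - level w1 + (level z - level y) = level z - level w2"
    using assms(1,3,5) unfolding in_subtree_def by simp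
  also have "(par ^^ (level z - level w2)) z = w2" using assms(4) unfolding in_subtree_def by simp
  finally show False using assms(2) by simp
qed

text \<open>Consecutive vertices of a layer have equal or consecutive ancestors, and between two
  unprimed vertices of a layer below the root there is always a primed one.\<close>
lemma subtrees_no_edge_within_level:
  assumes "level w1 = level w2" "w1 \<noteq> w2" "in_subtree w1 y" "in_subtree w2 z" "level y = level z"
    and "level w1 \<ge> 1" "\<not> primed w1" "\<not> primed w2"
  shows "{y, z} \<notin> EB \<union> ER"
proof
  assume "{y, z} \<in> EB \<union> ER"
  then obtain i k where ik: "Suc k < length (Ls i)" "{y, z} = {Ls i ! k, Ls i ! Suc k}"
    and ly: "level y = i"
    by (cases rule: edge_cases) (use assms(5) in auto)
  define d where "d = i - level w1"
  have l1: "level w1 \<le> i" using assms(3) ly unfolding in_subtree_def by simp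
  have "(par ^^ d) y = w1" "(par ^^ d) z = w2"
    using assms(1,3,4,5) ly unfolding in_subtree_def d_def by simp_all
  moreover have "i - d = level w1" using l1 unfolding d_def by simp
  ultimately obtain m where m: "Suc m < length (Ls (level w1))"
     "(w1 = Ls (level w1) ! m \<and> w2 = Ls (level w1) ! Suc m) \<or> (w2 = Ls (level w1) ! m \<and> w1 = Ls (level w1) ! Suc m)"
    using ancestors_of_neighbours[OF ik(1), of d] ik(2) assms(2) unfolding d_def
    by (auto simp: doubleton_eq_iff)
  obtain l where l: "level w1 = Suc l" using assms(6) by (cases "level w1") auto
  show False
    using primed_nth_next_layer[of m l] primed_nth_next_layer[of "Suc m" l] m l assms(7,8) by auto
qed

lemma subtrees_anticomplete:
  assumes "level w1 = level w2" "w1 \<noteq> w2" "in_subtree w1 y" "in_subtree w2 z"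
    and "level w1 \<ge> 1" "\<not> primed w1" "\<not> primed w2"
  shows "{y, z} \<notin> EB \<union> ER" "y \<noteq> z"
proof -
  consider "level y < level z" | "level y = level z" | "level z < level y" by linarith
  then show "{y, z} \<notin> EB \<union> ER"
  proof cases
    case 3
    then show ?thesis
      using subtrees_no_edge_across_levels[of w2 w1 z y] assms by (auto simp: insert_commute)
  qed (use subtrees_no_edge_across_levels subtrees_no_edge_within_level assms in blast)+
  show "y \<noteq> z"
    using assms(1-4) unfolding in_subtree_def by auto
qed

end

section \<open>Chordal graphs\<close>

locale finite_chordal_graph =
  fixes VG :: "'a set" and E :: "'a set set"
  assumes finite_VG: "finite VG" and chordal: "chordal_graph VG E"
begin

definition adj :: "'a \<Rightarrow> 'a \<Rightarrow> bool" where
  "adj a b \<longleftrightarrow> {a, b} \<in> E"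

lemma adj_sym: "adj a b \<longleftrightarrow> adj b a"
  unfolding adj_def by (simp add: insert_commute)

definition clique :: "'a set \<Rightarrow> bool" where
  "clique K \<longleftrightarrow> (\<forall>a\<in>K. \<forall>b\<in>K. a \<noteq> b \<longrightarrow> adj a b)"

definition induced_path :: "'a list \<Rightarrow> bool" where
  "induced_path Q \<longleftrightarrow> distinct Q \<and>
     (\<forall>i j. i < j \<longrightarrow> j < length Q \<longrightarrow> (adj (Q ! i) (Q ! j) \<longleftrightarrow> j = Suc i))"

lemma induced_path_drop: "induced_path P \<Longrightarrow> induced_path (drop j P)"
  unfolding induced_path_def by auto

lemma induced_path_Cons:
  assumes "induced_path D" "y \<notin> set D" "D \<noteq> []" "adj y (D ! 0)"
    and "\<forall>k. 0 < k \<longrightarrow> k < length D \<longrightarrow> \<not> adj y (D ! k)"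
  shows "induced_path (y # D)"
  unfolding induced_path_def
proof (intro conjI allI impI)
  show "distinct (y # D)" using assms(1,2) unfolding induced_path_def by simp
next
  fix i j assume ij: "i < j" "j < length (y # D)"
  then obtain j' where j': "j = Suc j'" by (cases j) auto
  show "adj ((y # D) ! i) ((y # D) ! j) = (j = Suc i)"
  proof (cases i)
    case 0
    then show ?thesis using assms(4,5) ij j' by (cases j') auto
  next
    case (Suc i')
    then show ?thesis using assms(1) ij j' unfolding induced_path_def by auto
  qed
qed

lemma induced_long_cycle_Cons:
  assumes "induced_path Q" "length Q \<ge> 3" "x \<notin> set Q" "x \<in> VG" "set Q \<subseteq> VG"
    and "\<forall>i<length Q. adj x (Q ! i) \<longleftrightarrow> (i = 0 \<or> i = length Q - 1)"
  shows "induced_long_cycle VG E (x # Q)"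
proof -
  define L where "L = length (x # Q)"
  have ordered: "adj ((x # Q) ! i) ((x # Q) ! j) \<longleftrightarrow> (j = Suc i \<or> (i = 0 \<and> j = L - 1))"
    if ij: "i < j" "j < L" for i j
  proof -
    obtain j' where j': "j = Suc j'" using ij by (cases j) auto
    show ?thesis
    proof (cases i)
      case 0
      then show ?thesis using assms(6) ij j' unfolding L_def by auto
    next
      case (Suc i')
      then show ?thesis using assms(1) ij j' unfolding induced_path_def L_def by auto
    qed
  qed
  have "({(x # Q) ! i, (x # Q) ! j} \<in> E) = (j = Suc i mod L \<or> i = Suc j mod L)"
    if "i < L" "j < L" "i \<noteq> j" for i j
  proof (cases "i < j")
    case True
    have "Suc i mod L = Suc i" using True that by simp
    moreover have "(i = Suc j mod L) \<longleftrightarrow> (i = 0 \<and> j = L - 1)"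
      using True that by (cases "Suc j = L") auto
    ultimately show ?thesis using ordered[OF True that(2)] unfolding adj_def by auto
  next
    case False
    then have ji: "j < i" using that by simp
    have "Suc j mod L = Suc j" using ji that by simp
    moreover have "(j = Suc i mod L) \<longleftrightarrow> (j = 0 \<and> i = L - 1)"
      using ji that by (cases "Suc i = L") auto
    ultimately show ?thesis
      using ordered[OF ji that(1)] unfolding adj_def by (auto simp: insert_commute)
  qed
  then show ?thesis
    using assms(1-5) unfolding induced_long_cycle_def L_def induced_path_def by auto
qed

lemma induced_path_Cons_drop:
  assumes "induced_path P" "y \<notin> set P" "j < length P" "adj (P ! j) y"
    and "\<forall>k. j < k \<longrightarrow> k < length P \<longrightarrow> \<not> adj (P ! k) y"
  shows "induced_path (y # drop j P)"
proof (rule induced_path_Cons)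
  show "induced_path (drop j P)" using assms(1) by (rule induced_path_drop)
  show "y \<notin> set (drop j P)" "drop j P \<noteq> []" using assms(2,3) by (auto dest: in_set_dropD)
  show "adj y (drop j P ! 0)" using assms(3,4) adj_sym by simp
  show "\<forall>k. 0 < k \<longrightarrow> k < length (drop j P) \<longrightarrow> \<not> adj y (drop j P ! k)"
    using assms(3,5) adj_sym by auto
qed

text \<open>Otherwise \<open>x\<close>, \<open>y\<close> and the part of \<open>P\<close> from the last neighbour of \<open>y\<close> on would form an
  induced cycle of length at least 4.\<close>
lemma adj_last_if_adj_hd:
  assumes P: "induced_path P" "P \<noteq> []" "set P \<subseteq> VG"
    and x: "x \<in> VG" "x \<notin> set P" "adj (last P) x" "\<forall>i. Suc i < length P \<longrightarrow> \<not> adj (P ! i) x"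
    and y: "y \<in> VG" "y \<notin> set P" "adj x y" "adj (hd P) y"
  shows "adj (last P) y"
proof (rule ccontr)
  assume not_adj: "\<not> adj (last P) y"
  have lastP: "last P = P ! (length P - 1)" and hdP: "hd P = P ! 0"
    using P(2) by (simp_all add: last_conv_nth hd_conv_nth)
  have "length P \<noteq> 1" using not_adj y(4) lastP hdP by auto
  then have "Suc 0 < length P" using P(2) by (cases P) auto
  then have "x \<noteq> y" using x(4) y(4) hdP by auto
  define J where "J = {i. i < length P \<and> adj (P ! i) y}"
  define j where "j = Max J"
  have "0 \<in> J" "finite J" unfolding J_def using hdP y(4) P(2) by auto
  then have jJ: "j \<in> J" and jmax: "\<forall>k\<in>J. k \<le> j" unfolding j_def using Max_in by auto
  have "j < length P" "j \<noteq> length P - 1"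
    using jJ not_adj lastP unfolding J_def by auto
  then have jlt: "j < length P - 1" by linarith
  define D where "D = drop j P"
  have lenD: "length D = length P - j" and Dk: "\<And>k. k < length D \<Longrightarrow> D ! k = P ! (j + k)"
    unfolding D_def using jlt by auto
  have "\<forall>k. j < k \<longrightarrow> k < length P \<longrightarrow> \<not> adj (P ! k) y"
    using jmax unfolding J_def by fastforce
  then have "induced_path (y # D)"
    unfolding D_def using induced_path_Cons_drop[OF P(1) y(2)] jJ unfolding J_def by blast
  moreover have "\<forall>i<length (y # D). adj x ((y # D) ! i) \<longleftrightarrow> (i = 0 \<or> i = length (y # D) - 1)"
  proof (intro allI impI)
    fix i assume i: "i < length (y # D)"
    show "adj x ((y # D) ! i) \<longleftrightarrow> (i = 0 \<or> i = length (y # D) - 1)"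
    proof (cases i)
      case (Suc k)
      then have "(y # D) ! i = P ! (j + k)" "j + k < length P" using Dk i lenD by auto
      then show ?thesis using x(3,4) lastP Suc lenD jlt adj_sym
        by (cases "j + k = length P - 1") auto
    qed (use y(3) in simp)
  qed
  moreover have "set (y # D) \<subseteq> VG" "x \<notin> set (y # D)"
    unfolding D_def using P(3) x(2) y(1) \<open>x \<noteq> y\<close> by (auto dest: in_set_dropD)
  moreover have "length (y # D) \<ge> 3" using lenD jlt by simp
  ultimately have "induced_long_cycle VG E (x # y # D)"
    using induced_long_cycle_Cons x(1) by blast
  then show False using chordal unfolding chordal_graph_def by blast
qed

definition walk_in :: "'a set \<Rightarrow> 'a list \<Rightarrow> bool" where
  "walk_in S P \<longleftrightarrow> P \<noteq> [] \<and> successively adj P \<and> set P \<subseteq> S"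

lemma walk_in_take: "walk_in S P \<Longrightarrow> 0 < n \<Longrightarrow> walk_in S (take n P)"
  unfolding walk_in_def successively_conv_nth by (auto dest: in_set_takeD)

lemma walk_in_drop: "walk_in S P \<Longrightarrow> n < length P \<Longrightarrow> walk_in S (drop n P)"
  unfolding walk_in_def successively_conv_nth by (auto dest: in_set_dropD)

lemma walk_in_append:
  "walk_in S P \<Longrightarrow> walk_in S Q \<Longrightarrow> adj (last P) (hd Q) \<Longrightarrow> walk_in S (P @ Q)"
  unfolding walk_in_def by (auto simp: successively_append_iff)

lemma walk_in_shortcut:
  assumes "walk_in S P" "i < j" "j < length P" "P ! i = P ! j \<or> adj (P ! i) (P ! j)"
  obtains P' where "walk_in S P'" "hd P' = hd P" "last P' = last P"
    "length P' = length P - (j - i) + (if P ! i = P ! j then 0 else 1)"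
proof (cases "P ! i = P ! j")
  case True
  have "walk_in S (take i P @ drop j P)"
  proof (cases i)
    case 0
    then show ?thesis using walk_in_drop[OF assms(1,3)] by simp
  next
    case (Suc i')
    then have "adj (P ! i') (P ! i)"
      using assms(1-3) unfolding walk_in_def by (simp add: successively_nth)
    moreover have "last (take i P) = P ! i'"
      using Suc assms(2,3) by (simp add: last_take_Suc)
    ultimately show ?thesis
      using walk_in_take[OF assms(1), of i] walk_in_drop[OF assms(1,3)] assms(3) True Suc
      by (intro walk_in_append) (auto simp: hd_drop_conv_nth)
  qed
  moreover have "hd (take i P @ drop j P) = hd P"
  proof -
    have "P \<noteq> []" using assms(3) by auto
    then show ?thesis using assms(3) True by (cases i) (simp add: hd_drop_conv_nth hd_conv_nth, simp)
  qed
  ultimately show ?thesis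
    using that assms(2,3) True by auto
next
  case False
  then have "walk_in S (take (Suc i) P @ drop j P)"
    using walk_in_take[OF assms(1), of "Suc i"] walk_in_drop[OF assms(1,3)] assms(2-4)
    by (intro walk_in_append) (auto simp: last_take_Suc hd_drop_conv_nth)
  moreover have "P \<noteq> []" using assms(3) by auto
  then have "hd (take (Suc i) P @ drop j P) = hd P" "last (take (Suc i) P @ drop j P) = last P"
    using assms(3) by (auto simp: hd_append)
  ultimately show ?thesis
    using that assms(2,3) False by simp
qed

lemma shortest_walk_induced_path:
  assumes P: "walk_in S P" "hd P = v" "T (last P)"
    and shortest: "\<And>P'. walk_in S P' \<Longrightarrow> hd P' = v \<Longrightarrow> T (last P') \<Longrightarrow> length P \<le> length P'"
  shows "\<forall>i. Suc i < length P \<longrightarrow> \<not> T (P ! i)" "induced_path P"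
proof -
  show "\<forall>i. Suc i < length P \<longrightarrow> \<not> T (P ! i)"
  proof (intro allI impI notI)
    fix i assume i: "Suc i < length P" "T (P ! i)"
    then have "walk_in S (take (Suc i) P)" "hd (take (Suc i) P) = v" "T (last (take (Suc i) P))"
      using P walk_in_take[OF P(1), of "Suc i"] by (simp_all add: last_take_Suc)
    then show False using shortest[of "take (Suc i) P"] i by simp
  qed
  have no_shortcut: "\<not> (P ! i = P ! j \<or> adj (P ! i) (P ! j))"
    if ij: "i < j" "j < length P" "P ! i = P ! j \<or> j \<noteq> Suc i" for i j
  proof
    assume "P ! i = P ! j \<or> adj (P ! i) (P ! j)"
    then obtain P' where "walk_in S P'" "hd P' = v" "last P' = last P"
      "length P' = length P - (j - i) + (if P ! i = P ! j then 0 else 1)"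
      using walk_in_shortcut[OF P(1) ij(1,2)] P(2) by metis
    then show False
      using shortest[of P'] P(3) ij by (auto split: if_splits)
  qed
  have "distinct P"
    using no_shortcut unfolding distinct_conv_nth by (metis linorder_neqE_nat)
  moreover have "adj (P ! i) (P ! Suc i)" if "Suc i < length P" for i
    using P(1) that unfolding walk_in_def by (simp add: successively_nth)
  ultimately show "induced_path P"
    unfolding induced_path_def using no_shortcut by metis
qed

definition adj_within :: "'a set \<Rightarrow> ('a \<times> 'a) set" where
  "adj_within S = {(p, q). p \<in> S \<and> q \<in> S \<and> adj p q}"

definition component :: "'a set \<Rightarrow> 'a \<Rightarrow> 'a set" where
  "component S b = {x. (b, x) \<in> (adj_within S)\<^sup>*}"

lemma adj_within_rtrancl_sym: "(a, b) \<in> (adj_within S)\<^sup>* \<Longrightarrow> (b, a) \<in> (adj_within S)\<^sup>*"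
proof -
  have "(adj_within S)\<inverse> = adj_within S"
    unfolding adj_within_def by (auto simp: adj_sym)
  then show "(a, b) \<in> (adj_within S)\<^sup>* \<Longrightarrow> (b, a) \<in> (adj_within S)\<^sup>*"
    by (metis rtrancl_converseI)
qed

lemma self_in_component: "b \<in> component S b"
  unfolding component_def by simp

lemma component_subset: "b \<in> S \<Longrightarrow> component S b \<subseteq> S"
proof
  fix x assume "b \<in> S" "x \<in> component S b"
  then have "(b, x) \<in> (adj_within S)\<^sup>*" unfolding component_def by simp
  then show "x \<in> S" using \<open>b \<in> S\<close>
    by (induction rule: rtrancl_induct) (auto simp: adj_within_def)
qed

lemma component_eq: "x \<in> component S b \<Longrightarrow> component S x = component S b"
  unfolding component_def using adj_within_rtrancl_sym by (blast intro: rtrancl_trans)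

lemma adj_in_component:
  "x \<in> component S b \<Longrightarrow> x \<in> S \<Longrightarrow> y \<in> S \<Longrightarrow> adj x y \<Longrightarrow> y \<in> component S b"
  unfolding component_def adj_within_def by (auto intro: rtrancl_into_rtrancl)

lemma walk_in_component:
  assumes "y \<in> component S x" "x \<in> S"
  obtains P where "walk_in S P" "hd P = x" "last P = y"
proof -
  have "(x, y) \<in> (adj_within S)\<^sup>*"
    using assms(1) unfolding component_def by simp
  then have "\<exists>P. walk_in S P \<and> hd P = x \<and> last P = y"
  proof (induction rule: rtrancl_induct)
    case base
    then show ?case using assms(2) by (intro exI[of _ "[x]"]) (simp add: walk_in_def)
  next
    case (step y z)
    then obtain P where P: "walk_in S P" "hd P = x" "last P = y" by blast
    have "walk_in S [z]" "adj y z" using step(2) unfolding walk_in_def adj_within_def by auto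
    then have "walk_in S (P @ [z])" using P walk_in_append by simp
    then show ?case using P unfolding walk_in_def by (intro exI[of _ "P @ [z]"]) simp
  qed
  then show thesis using that by blast
qed

lemma walk_in_subset_component:
  "walk_in S P \<Longrightarrow> hd P \<in> component S b \<Longrightarrow> set P \<subseteq> component S b"
proof (induction P rule: induct_list012)
  case (3 x y zs)
  have "y \<in> component S b"
    using 3(3,4) adj_in_component[of x S b y] unfolding walk_in_def by simp
  moreover have "walk_in S (y # zs)"
    using 3(3) unfolding walk_in_def by simp
  ultimately show ?case using 3(2,4) by simp
qed auto

text \<open>The end of a shortest walk in \<open>S\<close> from \<open>v\<close> to a neighbour of \<open>x\<close> keeps, by
  \<open>adj_last_if_adj_hd\<close>, all neighbours of \<open>v\<close> in the clique \<open>K\<close>.\<close>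
lemma component_vertex_gains_neighbour:
  assumes K: "K \<subseteq> VG" "clique K" and S: "S \<subseteq> VG" "S \<inter> K = {}" "v \<in> S"
    and x: "x \<in> K" "\<not> adj v x" and c: "c \<in> component S v" "adj c x"
  shows "\<exists>v'\<in>component S v. adj v' x \<and> (\<forall>y\<in>K. adj v y \<longrightarrow> adj v' y)"
proof -
  obtain P0 where "walk_in S P0" "hd P0 = v" "last P0 = c"
    using walk_in_component c(1) S(3) by blast
  then obtain P where P: "walk_in S P" "hd P = v" "adj (last P) x"
    and shortest: "\<And>P'. walk_in S P' \<Longrightarrow> hd P' = v \<Longrightarrow> adj (last P') x \<Longrightarrow> length P \<le> length P'"
    using ex_has_least_nat[of "\<lambda>P. walk_in S P \<and> hd P = v \<and> adj (last P) x" P0 length] c(2)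
    by blast
  note P_induced = shortest_walk_induced_path[of S P v "\<lambda>z. adj z x", OF P shortest]
  have P_facts: "P \<noteq> []" "set P \<inter> K = {}" "set P \<subseteq> VG"
    using P(1) S unfolding walk_in_def by auto
  have "adj (last P) y" if y: "y \<in> K" "adj v y" for y
  proof (rule adj_last_if_adj_hd[OF P_induced(2)])
    show "x \<in> VG" "x \<notin> set P" "y \<in> VG" "y \<notin> set P"
      using x(1) y(1) K(1) P_facts by auto
    show "adj x y" using y x K(2) unfolding clique_def by auto
    show "adj (hd P) y" using y(2) P(2) by simp
  qed (use P P_induced P_facts in auto)
  moreover have "set P \<subseteq> component S v"
    using walk_in_subset_component[OF P(1), of v] P(2) self_in_component by simp
  then have "last P \<in> component S v" using P_facts(1) by auto
  ultimately show ?thesis using P(3) by blast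
qed

text \<open>A vertex of the component with the most neighbours in \<open>K\<close> will do.\<close>
lemma dominating_vertex_in_component:
  assumes K: "K \<subseteq> VG" "clique K" and S: "S \<subseteq> VG" "S \<inter> K = {}" "b \<in> S"
  shows "\<exists>v\<in>component S b. \<forall>a\<in>K. (\<exists>c\<in>component S b. adj c a) \<longrightarrow> adj v a"
proof -
  define C where "C = component S b"
  define nbrs where "nbrs v = card {a\<in>K. adj v a}" for v
  have "C \<subseteq> VG" using component_subset[OF S(3)] S(1) unfolding C_def by blast
  then have "finite C" "finite K"
    using K(1) finite_VG by (auto intro: finite_subset)
  moreover have "b \<in> C" unfolding C_def by (rule self_in_component)
  ultimately have "Max (nbrs ` C) \<in> nbrs ` C"
    by (intro Max_in) auto
  then obtain v where v: "v \<in> C" "nbrs v = Max (nbrs ` C)"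
    by (metis imageE)
  then have vmax: "\<forall>v'\<in>C. nbrs v' \<le> nbrs v"
    using \<open>finite C\<close> by simp
  have CS: "C = component S v" "v \<in> S"
    using component_eq[of v S b] v(1) component_subset[OF S(3)] unfolding C_def by auto
  have "adj v x" if x: "x \<in> K" "c \<in> C" "adj c x" for x c
  proof (rule ccontr)
    assume "\<not> adj v x"
    then obtain v' where v': "v' \<in> C" "adj v' x" "\<forall>y\<in>K. adj v y \<longrightarrow> adj v' y"
      using component_vertex_gains_neighbour[OF K S(1,2) CS(2) x(1) _ _ x(3)] x(2) CS(1) by blast
    then have "{a\<in>K. adj v a} \<subset> {a\<in>K. adj v' a}"
      using x(1) \<open>\<not> adj v x\<close> by blast
    then have "nbrs v < nbrs v'"
      unfolding nbrs_def using \<open>finite K\<close> by (intro psubset_card_mono) auto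
    then show False using vmax v'(1) by fastforce
  qed
  then show ?thesis using v(1) unfolding C_def by blast
qed

end

section \<open>Downward paths\<close>

lemma range_eq_insert_tail: "range p = insert (p 0) (p ` {Suc 0..})"
proof -
  have "p k \<in> insert (p 0) (p ` {Suc 0..})" for k
    by (cases k) auto
  then show ?thesis by auto
qed

lemma card_range_Int_tail:
  fixes p :: "nat \<Rightarrow> 'a"
  assumes "finite (p ` {Suc 0..} \<inter> X)"
  shows "finite (range p \<inter> X)"
    and "card (range p \<inter> X) = (if p 0 \<in> X \<and> p 0 \<notin> p ` {Suc 0..} then Suc else id) (card (p ` {Suc 0..} \<inter> X))"
proof -
  have eq: "range p \<inter> X = (if p 0 \<in> X then insert (p 0) (p ` {Suc 0..} \<inter> X) else p ` {Suc 0..} \<inter> X)"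
    by (subst range_eq_insert_tail) auto
  then show "finite (range p \<inter> X)" using assms by simp
  show "card (range p \<inter> X) = (if p 0 \<in> X \<and> p 0 \<notin> p ` {Suc 0..} then Suc else id) (card (p ` {Suc 0..} \<inter> X))"
    unfolding eq using assms by (auto simp: card_insert_if)
qed

lemma downward_path_prepend:
  assumes "downward_path V root par w q" "w \<in> V" "w \<noteq> root" "par w = c"
  shows "downward_path V root par c (case_nat c q)"
  using assms unfolding downward_path_def by (auto split: nat.split)

lemma downward_path_iterate:
  assumes step: "\<And>x. Q x \<Longrightarrow> \<exists>y. Q y \<and> pos y \<in> V \<and> pos y \<noteq> root \<and> par (pos y) = pos x \<and> pos y \<notin> X"
    and "Q x0"
  shows "\<exists>p. downward_path V root par (pos x0) p \<and> (\<forall>k. p (Suc k) \<notin> X)"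
proof -
  define next_state where
    "next_state x = (SOME y. Q y \<and> pos y \<in> V \<and> pos y \<noteq> root \<and> par (pos y) = pos x \<and> pos y \<notin> X)" for x
  have next_state: "Q (next_state x) \<and> pos (next_state x) \<in> V \<and> pos (next_state x) \<noteq> root \<and>
      par (pos (next_state x)) = pos x \<and> pos (next_state x) \<notin> X" if "Q x" for x
    unfolding next_state_def by (rule someI_ex[OF step[OF that]])
  define p where "p k = pos ((next_state ^^ k) x0)" for k
  have "Q ((next_state ^^ k) x0)" for k
    by (induction k) (use \<open>Q x0\<close> next_state in auto)
  then have "downward_path V root par (pos x0) p" "\<forall>k. p (Suc k) \<notin> X"
    unfolding downward_path_def p_def using next_state by auto
  then show ?thesis by blast
qed

section \<open>The greedy embedding\<close>

locale greedy_embedding =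
  gt_construction t V root Ls par lab EB ER + finite_chordal_graph VH "EBH \<union> ERH"
  for t :: nat and V :: "'v set" and root :: 'v and Ls :: "nat \<Rightarrow> 'v list" and par :: "'v \<Rightarrow> 'v"
    and lab :: "'v \<Rightarrow> 'v set \<times> 'v set \<times> bool" and EB ER :: "'v set set"
    and VH :: "'h set" and EBH ERH :: "'h set set" +
  fixes X :: "'v set"
  assumes trigraph_H: "trigraph VH EBH ERH"
    and clique_number_H: "clique_number_le VH (EBH \<union> ERH) (t + 1)"
    and triangle_free_H: "triangle_free VH EBH"
begin

definition meets_X_below :: "'v \<Rightarrow> nat \<Rightarrow> bool" where
  "meets_X_below c n \<longleftrightarrow> (\<forall>p. downward_path V root par c p \<longrightarrow>
     infinite (p ` {Suc 0..} \<inter> X) \<or> n \<le> card (p ` {Suc 0..} \<inter> X))"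

lemma meets_X_below_mono: "meets_X_below c n \<Longrightarrow> m \<le> n \<Longrightarrow> meets_X_below c m"
  unfolding meets_X_below_def by fastforce

lemma meets_X_below_child:
  assumes "meets_X_below c n" "w \<in> V" "w \<noteq> root" "par w = c"
  shows "meets_X_below w (if w \<in> X then n - 1 else n)"
  unfolding meets_X_below_def
proof (intro allI impI)
  fix q assume q: "downward_path V root par w q"
  define p where "p = case_nat c q"
  have "downward_path V root par c p"
    unfolding p_def using downward_path_prepend[OF q assms(2-4)] .
  moreover have "{Suc 0..} = range Suc"
    by (auto dest: Suc_le_D)
  then have "p ` {Suc 0..} = range q"
    unfolding p_def by (simp add: image_image)
  ultimately have "infinite (range q \<inter> X) \<or> n \<le> card (range q \<inter> X)"
    using assms(1) unfolding meets_X_below_def by auto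
  moreover have "q 0 = w" using q unfolding downward_path_def by simp
  ultimately show "infinite (q ` {Suc 0..} \<inter> X) \<or> (if w \<in> X then n - 1 else n) \<le> card (q ` {Suc 0..} \<inter> X)"
    using card_range_Int_tail[of q X] by (auto split: if_splits)
qed

lemma meets_X_below_initial:
  assumes "\<forall>p. downward_path V root par u p \<longrightarrow> \<not> (finite (range p \<inter> X) \<and> card (range p \<inter> X) \<le> m)"
  shows "meets_X_below u (if u \<in> X then m else Suc m)"
  unfolding meets_X_below_def
proof (intro allI impI)
  fix p assume p: "downward_path V root par u p"
  then have "p 0 = u" unfolding downward_path_def by simp
  then show "infinite (p ` {Suc 0..} \<inter> X) \<or> (if u \<in> X then m else Suc m) \<le> card (p ` {Suc 0..} \<inter> X)"
    using assms p card_range_Int_tail[of p X] by (auto split: if_splits)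
qed

lemma not_meets_X_below_if_avoiding:
  assumes "meets_X_below c n" "n \<ge> 1" "downward_path V root par c p" "\<forall>k. p (Suc k) \<notin> X"
  shows False
proof -
  have "p ` {Suc 0..} \<inter> X = {}" using assms(4) by (auto dest!: Suc_le_D)
  then show False using assms(1-3) unfolding meets_X_below_def by force
qed

lemma adj_H_in_VH:
  assumes "adj a b"
  shows "a \<in> VH \<and> b \<in> VH"
proof -
  obtain x y where "x \<in> VH" "y \<in> VH" "{a, b} = {x, y}"
    using assms trigraph_H unfolding adj_def trigraph_def by blast
  then show ?thesis by (auto simp: doubleton_eq_iff)
qed

definition embeds :: "('h \<Rightarrow> 'v) \<Rightarrow> 'h set \<Rightarrow> bool" where
  "embeds f D \<longleftrightarrow> inj_on f D \<and> (\<forall>a\<in>D. \<forall>b\<in>D. a \<noteq> b \<longrightarrow>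
     ({f a, f b} \<in> EB \<longleftrightarrow> {a, b} \<in> EBH) \<and> ({f a, f b} \<in> ER \<longleftrightarrow> {a, b} \<in> ERH))"

lemma embeds_mono: "embeds f D \<Longrightarrow> D' \<subseteq> D \<Longrightarrow> embeds f D'"
  unfolding embeds_def by (blast intro: inj_on_subset)

lemma embeds_cong: "embeds f D \<Longrightarrow> (\<And>x. x \<in> D \<Longrightarrow> f' x = f x) \<Longrightarrow> embeds f' D"
  unfolding embeds_def by (simp add: inj_on_def)

lemma embedsD:
  "embeds f D \<Longrightarrow> a \<in> D \<Longrightarrow> b \<in> D \<Longrightarrow> a \<noteq> b \<Longrightarrow>
     f a \<noteq> f b \<and> ({f a, f b} \<in> EB \<longleftrightarrow> {a, b} \<in> EBH) \<and> ({f a, f b} \<in> ER \<longleftrightarrow> {a, b} \<in> ERH)"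
  unfolding embeds_def inj_on_def by blast

lemma embeds_UN:
  assumes "\<And>i. i \<in> I \<Longrightarrow> embeds f (D i)"
    and "\<And>i j x y. i \<in> I \<Longrightarrow> j \<in> I \<Longrightarrow> x \<in> D i - D j \<Longrightarrow> y \<in> D j - D i \<Longrightarrow>
      f x \<noteq> f y \<and> \<not> adj x y \<and> {f x, f y} \<notin> EB \<union> ER"
  shows "embeds f (\<Union>i\<in>I. D i)"
proof -
  have "f x \<noteq> f y \<and> ({f x, f y} \<in> EB \<longleftrightarrow> {x, y} \<in> EBH) \<and> ({f x, f y} \<in> ER \<longleftrightarrow> {x, y} \<in> ERH)"
    if "i \<in> I" "j \<in> I" "x \<in> D i" "y \<in> D j" "x \<noteq> y" for i j x y
  proof (cases "y \<in> D i \<or> x \<in> D j")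
    case True
    then show ?thesis
    proof
      assume "y \<in> D i"
      then show ?thesis using embedsD[OF assms(1)[OF that(1)] that(3) _ that(5)] by blast
    next
      assume "x \<in> D j"
      then show ?thesis using embedsD[OF assms(1)[OF that(2)] _ that(4) that(5)] by blast
    qed
  next
    case False
    then show ?thesis using assms(2)[of i j x y] that unfolding adj_def by auto
  qed
  then show ?thesis unfolding embeds_def inj_on_def by blast
qed

lemma embeds_Un:
  assumes "embeds f D1" "embeds f D2"
    and "\<And>x y. x \<in> D1 - D2 \<Longrightarrow> y \<in> D2 - D1 \<Longrightarrow> f x \<noteq> f y \<and> \<not> adj x y \<and> {f x, f y} \<notin> EB \<union> ER"
  shows "embeds f (D1 \<union> D2)"
proof -
  have "embeds f (\<Union>D\<in>{D1, D2}. D)"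
  proof (rule embeds_UN)
    fix D D' x y assume "D \<in> {D1, D2}" "D' \<in> {D1, D2}" "x \<in> D - D'" "y \<in> D' - D"
    then show "f x \<noteq> f y \<and> \<not> adj x y \<and> {f x, f y} \<notin> EB \<union> ER"
      using assms(3)[of x y] assms(3)[of y x] by (auto simp: adj_sym insert_commute)
  qed (use assms(1,2) in auto)
  then show ?thesis by simp
qed

definition below :: "'v \<Rightarrow> 'v \<Rightarrow> bool" where
  "below c y \<longleftrightarrow> in_subtree c y \<and> level c < level y"

lemma below_if_in_subtree_child:
  assumes "w \<in> set (Ls (Suc (level c)))" "par w = c" "in_subtree w y"
  shows "below c y"
proof -
  have lw: "level w = Suc (level c)" using assms(1) level_eq by simp
  have y: "y \<in> V" "level w \<le> level y" "(par ^^ (level y - level w)) y = w"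
    using assms(3) unfolding in_subtree_def by auto
  have "level y - level c = Suc (level y - level w)" using lw y(2) by simp
  then have "(par ^^ (level y - level c)) y = c" using y(3) assms(2) by simp
  then show ?thesis unfolding below_def in_subtree_def using y(1,2) lw by simp
qed

text \<open>The state of the greedy embedding at a vertex \<open>c\<close> of \<open>T'_t\<close>: the clique \<open>K\<close> of \<open>H\<close> is
  already embedded by \<open>g\<close> into \<open>X \<inter> N\<^sup>\<up>[c]\<close>, and the vertices of \<open>S\<close>, all of whose neighbours
  lie in \<open>K \<union> S\<close>, are still to be embedded below \<open>c\<close>.\<close>
definition config :: "'v \<Rightarrow> 'h set \<Rightarrow> 'h set \<Rightarrow> ('h \<Rightarrow> 'v) \<Rightarrow> bool" where
  "config c K S g \<longleftrightarrow> c \<in> V \<and> K \<subseteq> VH \<and> S \<subseteq> VH \<and> K \<inter> S = {} \<and> clique K \<and>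
     (\<forall>a\<in>S. \<forall>b. adj a b \<longrightarrow> b \<in> K \<union> S) \<and> embeds g K \<and> g ` K \<subseteq> X \<and>
     g ` K \<subseteq> Nup Ls EB ER (level c) c"

text \<open>\<open>Q\<close> locates the images of \<open>S\<close>: strictly below \<open>c\<close>, or in the subtree of a child of \<open>c\<close>.\<close>
definition extension ::
  "('v \<Rightarrow> bool) \<Rightarrow> 'v \<Rightarrow> 'h set \<Rightarrow> 'h set \<Rightarrow> ('h \<Rightarrow> 'v) \<Rightarrow> ('h \<Rightarrow> 'v) \<Rightarrow> bool" where
  "extension Q c K S g f \<longleftrightarrow> (\<forall>a\<in>K. f a = g a) \<and> embeds f (K \<union> S) \<and> f ` S \<subseteq> X \<and>
     (\<forall>b\<in>S. Q (f b)) \<and> (\<forall>b\<in>S. \<forall>z. level z \<le> level c \<longrightarrow> z \<notin> g ` K \<longrightarrow> {f b, z} \<notin> EB \<union> ER)"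

definition extendable :: "'v \<Rightarrow> 'h set \<Rightarrow> 'h set \<Rightarrow> ('h \<Rightarrow> 'v) \<Rightarrow> bool" where
  "extendable c K S g \<longleftrightarrow> (\<exists>f. extension (below c) c K S g f)"

lemma contains_induced_if_extendable:
  assumes "config c K S g" "extendable c K S g" "K \<union> S = VH"
  shows "contains_induced VH EBH ERH X EB ER"
proof -
  obtain f where f: "\<forall>a\<in>K. f a = g a" "embeds f VH" "f ` S \<subseteq> X"
    using assms(2,3) unfolding extendable_def extension_def by auto
  have "f ` K \<subseteq> X" using assms(1) f(1) unfolding config_def by auto
  then have "f ` VH \<subseteq> X" using f(3) assms(3) by blast
  then show ?thesis using f(2) unfolding contains_induced_def embeds_def by blast
qed

context
  fixes c K S g
  assumes config: "config c K S g"
begin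

lemma config_facts:
  "c \<in> V" "K \<subseteq> VH" "S \<subseteq> VH" "K \<inter> S = {}" "clique K"
  "\<And>a b. a \<in> S \<Longrightarrow> adj a b \<Longrightarrow> b \<in> K \<union> S" "embeds g K" "g ` K \<subseteq> X"
  "g ` K \<subseteq> Nup Ls EB ER (level c) c"
  using config unfolding config_def by simp_all

lemma finite_S: "finite S"
  using config_facts(3) finite_VG by (rule finite_subset)

lemma level_g_le: "a \<in> K \<Longrightarrow> g a \<in> V \<and> level (g a) \<le> level c"
  using Nup_level in_layer_level config_facts(1,9) by blast

lemma extendable_empty: "extendable c K {} g"
  unfolding extendable_def extension_def using config_facts(7) by auto

definition head :: "'h \<Rightarrow> 'h" where
  "head b = (SOME v. v \<in> component S b \<and> (\<forall>a\<in>K. (\<exists>x\<in>component S b. adj x a) \<longrightarrow> adj v a))"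

definition attachment :: "'h \<Rightarrow> 'h set \<times> 'h set" where
  "attachment b = ({a\<in>K. {head b, a} \<in> EBH}, {a\<in>K. {head b, a} \<in> ERH})"

definition attached :: "'h set \<times> 'h set \<Rightarrow> 'h set" where
  "attached l = {b\<in>S. attachment b = l}"

definition child_for :: "'h set \<times> 'h set \<Rightarrow> 'v" where
  "child_for l = (SOME w. w \<in> set (Ls (Suc (level c))) \<and> par w = c \<and> lab w = (g ` fst l, g ` snd l, False))"

lemma head_in_component: "b \<in> S \<Longrightarrow> head b \<in> component S b"
  and head_dominates: "b \<in> S \<Longrightarrow> a \<in> K \<Longrightarrow> x \<in> component S b \<Longrightarrow> adj x a \<Longrightarrow> adj (head b) a"
proof -
  assume "b \<in> S"
  moreover have "S \<inter> K = {}" using config_facts(4) by blast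
  ultimately have "\<exists>v\<in>component S b. \<forall>a\<in>K. (\<exists>x\<in>component S b. adj x a) \<longrightarrow> adj v a"
    using dominating_vertex_in_component[OF config_facts(2,5,3)] by blast
  then have "\<exists>v. v \<in> component S b \<and> (\<forall>a\<in>K. (\<exists>x\<in>component S b. adj x a) \<longrightarrow> adj v a)"
    by blast
  then have "head b \<in> component S b \<and> (\<forall>a\<in>K. (\<exists>x\<in>component S b. adj x a) \<longrightarrow> adj (head b) a)"
    unfolding head_def by (rule someI_ex)
  then show "head b \<in> component S b" "a \<in> K \<Longrightarrow> x \<in> component S b \<Longrightarrow> adj x a \<Longrightarrow> adj (head b) a"
    by blast+
qed

lemma head_in_S: "b \<in> S \<Longrightarrow> head b \<in> S"
  using head_in_component component_subset by blast

lemma head_notin_K: "b \<in> S \<Longrightarrow> head b \<notin> K"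
  using head_in_S config_facts(4) by blast

lemma attachment_subset: "fst (attachment b) \<subseteq> K" "snd (attachment b) \<subseteq> K"
  unfolding attachment_def by auto

lemma attachment_Un: "fst (attachment b) \<union> snd (attachment b) = {a\<in>K. adj (head b) a}"
  unfolding attachment_def adj_def by auto

lemma attachment_disjoint: "fst (attachment b) \<inter> snd (attachment b) = {}"
  using trigraph_H unfolding attachment_def trigraph_def by auto

lemma attachment_component: "x \<in> component S b \<Longrightarrow> attachment x = attachment b"
  unfolding attachment_def head_def using component_eq by simp

lemma attachment_adj: "x \<in> S \<Longrightarrow> y \<in> S \<Longrightarrow> adj x y \<Longrightarrow> attachment y = attachment x"
  using attachment_component adj_in_component[OF self_in_component] by blast

lemma head_attached: "b \<in> S \<Longrightarrow> head b \<in> attached (attachment b)"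
  unfolding attached_def using head_in_S head_in_component attachment_component by blast

lemma attached_subset: "attached l \<subseteq> S"
  unfolding attached_def by blast

lemma attached_neighbour_in_K:
  assumes "x \<in> attached l" "a \<in> K" "adj x a"
  shows "a \<in> fst l \<union> snd l"
proof -
  have "x \<in> S" "attachment x = l" using assms(1) unfolding attached_def by auto
  then show ?thesis
    using head_dominates[OF _ assms(2) self_in_component assms(3)] attachment_Un assms(2) by blast
qed

lemma attached_neighbour:
  assumes "x \<in> attached l" "adj x y"
  shows "y \<in> fst l \<union> snd l \<union> attached l"
proof -
  have xS: "x \<in> S" "attachment x = l" using assms(1) unfolding attached_def by auto
  then have "y \<in> K \<union> S" using config_facts(6) assms(2) by blast
  then show ?thesis
  proof
    assume "y \<in> K"
    then show ?thesis using attached_neighbour_in_K[OF assms(1) _ assms(2)] by blast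
  next
    assume "y \<in> S"
    then show ?thesis
      using attachment_adj[OF xS(1) _ assms(2)] xS(2) unfolding attached_def by blast
  qed
qed

lemma clique_head_attachment:
  assumes "b \<in> S"
  shows "clique (insert (head b) (fst (attachment b) \<union> snd (attachment b)))"
  using config_facts(5) attachment_Un[of b] adj_sym unfolding clique_def by auto

lemma card_attachment:
  assumes "b \<in> S"
  shows "card (fst (attachment b) \<union> snd (attachment b)) \<le> t"
proof -
  define A where "A = fst (attachment b) \<union> snd (attachment b)"
  have "A \<subseteq> K" using attachment_subset[of b] unfolding A_def by blast
  then have "insert (head b) A \<subseteq> VH"
    using config_facts(2,3) head_in_S[OF assms] by blast
  then have "finite (insert (head b) A) \<and> card (insert (head b) A) \<le> t + 1"
    using clique_number_H clique_head_attachment[OF assms]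
    unfolding clique_number_le_def clique_def adj_def A_def by blast
  moreover have "head b \<notin> A"
    using head_notin_K[OF assms] attachment_subset unfolding A_def by blast
  ultimately show ?thesis
    unfolding A_def[symmetric] using card_insert_disjoint[of A "head b"] by auto
qed

text \<open>Two black neighbours of the head together with the head would form a black triangle.\<close>
lemma black_attachment_red:
  assumes "b \<in> S" "a1 \<in> fst (attachment b)" "a2 \<in> fst (attachment b)" "a1 \<noteq> a2"
  shows "{a1, a2} \<in> ERH"
proof (rule ccontr)
  assume "{a1, a2} \<notin> ERH"
  moreover have a: "a1 \<in> K" "a2 \<in> K" "{head b, a1} \<in> EBH" "{head b, a2} \<in> EBH"
    using assms(2,3) unfolding attachment_def by auto
  moreover have "adj a1 a2" using config_facts(5) a(1,2) assms(4) unfolding clique_def by blast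
  ultimately have "{a1, a2} \<in> EBH" unfolding adj_def by blast
  moreover have "head b \<in> VH" "a1 \<in> VH" "a2 \<in> VH"
    using a config_facts(2,3) head_in_S[OF assms(1)] by auto
  moreover have "distinct [head b, a1, a2]"
    using head_notin_K[OF assms(1)] a(1,2) assms(4) by auto
  ultimately show False
    using triangle_free_H a(3,4) unfolding triangle_free_def by blast
qed

lemma attachment_admissible:
  assumes "b \<in> S"
  shows "(g ` fst (attachment b), g ` snd (attachment b)) \<in> admissible t Ls EB ER (level c) c"
proof -
  define B where "B = fst (attachment b)"
  define R where "R = snd (attachment b)"
  have BR: "B \<subseteq> K" "R \<subseteq> K" using attachment_subset unfolding B_def R_def by auto
  have inj: "inj_on g K" using config_facts(7) unfolding embeds_def by blast
  have "g ` B \<inter> g ` R = {}"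
    using inj_on_image_Int[OF inj BR] attachment_disjoint unfolding B_def R_def by simp
  moreover have "{x, y} \<in> ER" if xy: "x \<in> g ` B" "y \<in> g ` B" "x \<noteq> y" for x y
  proof -
    obtain a1 a2 where a: "a1 \<in> B" "a2 \<in> B" "x = g a1" "y = g a2" "a1 \<noteq> a2"
      using xy by blast
    then show ?thesis
      using black_attachment_red[OF assms] embedsD[OF config_facts(7)] BR unfolding B_def by blast
  qed
  moreover have "card (g ` B \<union> g ` R) \<le> t"
  proof -
    have "finite (B \<union> R)" using BR config_facts(2) finite_VG by (meson Un_least finite_subset)
    then have "card (g ` (B \<union> R)) \<le> card (B \<union> R)" by (rule card_image_le)
    then show ?thesis
      using card_attachment[OF assms] unfolding B_def R_def by (simp add: image_Un)
  qed
  moreover have "g ` B \<subseteq> Nup Ls EB ER (level c) c" "g ` R \<subseteq> Nup Ls EB ER (level c) c"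
    using BR config_facts(9) by auto
  ultimately show ?thesis unfolding admissible_def B_def R_def by blast
qed

lemma child_for_attachment:
  assumes "b \<in> S"
  shows "child_for (attachment b) \<in> set (Ls (Suc (level c)))" "par (child_for (attachment b)) = c"
    "lab (child_for (attachment b)) = (g ` fst (attachment b), g ` snd (attachment b), False)"
proof -
  have "c \<in> set (Ls (level c))" using in_layer_level config_facts(1) by blast
  then have "\<exists>w. w \<in> set (Ls (Suc (level c))) \<and> par w = c \<and>
      lab w = (g ` fst (attachment b), g ` snd (attachment b), False)"
    using child_exists attachment_admissible[OF assms] by blast
  then have "child_for (attachment b) \<in> set (Ls (Suc (level c))) \<and> par (child_for (attachment b)) = c \<and>
      lab (child_for (attachment b)) = (g ` fst (attachment b), g ` snd (attachment b), False)"
    unfolding child_for_def by (rule someI_ex)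
  then show "child_for (attachment b) \<in> set (Ls (Suc (level c)))" "par (child_for (attachment b)) = c"
    "lab (child_for (attachment b)) = (g ` fst (attachment b), g ` snd (attachment b), False)"
    by blast+
qed

lemma level_child_for: "b \<in> S \<Longrightarrow> level (child_for (attachment b)) = Suc (level c)"
  using child_for_attachment(1) level_eq by blast

lemma child_for_in_V: "b \<in> S \<Longrightarrow> child_for (attachment b) \<in> V"
  using child_for_attachment(1) in_V by blast

lemma child_for_inj:
  assumes "b1 \<in> S" "b2 \<in> S" "child_for (attachment b1) = child_for (attachment b2)"
  shows "attachment b1 = attachment b2"
proof -
  have "g ` fst (attachment b1) = g ` fst (attachment b2)" "g ` snd (attachment b1) = g ` snd (attachment b2)"
    using child_for_attachment(3)[OF assms(1)] child_for_attachment(3)[OF assms(2)] assms(3) by auto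
  moreover have "inj_on g K" using config_facts(7) unfolding embeds_def by blast
  ultimately have "fst (attachment b1) = fst (attachment b2)" "snd (attachment b1) = snd (attachment b2)"
    using inj_on_image_eq_iff attachment_subset by metis+
  then show ?thesis by (simp add: prod_eq_iff)
qed

lemma child_for_edge:
  assumes "b \<in> S" "level z < level (child_for (attachment b))"
  shows "{child_for (attachment b), z} \<in> EB \<longleftrightarrow> z \<in> g ` fst (attachment b)"
    and "{child_for (attachment b), z} \<in> ER \<longleftrightarrow> z \<in> g ` snd (attachment b)"
proof -
  note w = child_for_attachment[OF assms(1)]
  have "\<not> primed (child_for (attachment b))" using w(3) by simp
  then show "{child_for (attachment b), z} \<in> EB \<longleftrightarrow> z \<in> g ` fst (attachment b)"
    "{child_for (attachment b), z} \<in> ER \<longleftrightarrow> z \<in> g ` snd (attachment b)"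
    using black_edge_up_iff[OF w(1) _ assms(2)] red_edge_up_iff[OF w(1) _ assms(2)] w(3)
    by (simp_all only: insert_commute[of z] fst_conv snd_conv)
qed

lemma child_for_mirrors_head:
  assumes "b \<in> S" "a \<in> K"
  shows "({child_for (attachment b), g a} \<in> EB \<longleftrightarrow> {head b, a} \<in> EBH) \<and>
    ({child_for (attachment b), g a} \<in> ER \<longleftrightarrow> {head b, a} \<in> ERH)"
proof -
  have "level (g a) < level (child_for (attachment b))"
    using level_g_le[OF assms(2)] level_child_for[OF assms(1)] by simp
  moreover have "inj_on g K" using config_facts(7) unfolding embeds_def by blast
  then have "g a \<in> g ` fst (attachment b) \<longleftrightarrow> a \<in> fst (attachment b)"
    "g a \<in> g ` snd (attachment b) \<longleftrightarrow> a \<in> snd (attachment b)"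
    using inj_on_image_mem_iff assms(2) attachment_subset by metis+
  ultimately show ?thesis
    using child_for_edge[OF assms(1)] assms(2) unfolding attachment_def by simp
qed

lemma children_for_anticomplete:
  assumes "x \<in> S" "y \<in> S" "attachment x \<noteq> attachment y"
    and "in_subtree (child_for (attachment x)) u" "in_subtree (child_for (attachment y)) v"
  shows "{u, v} \<notin> EB \<union> ER" "u \<noteq> v"
proof -
  have "child_for (attachment x) \<noteq> child_for (attachment y)"
    using child_for_inj assms(1-3) by blast
  moreover have "level (child_for (attachment x)) = level (child_for (attachment y))"
    "level (child_for (attachment x)) \<ge> 1"
    using level_child_for assms(1,2) by auto
  moreover have "\<not> primed (child_for (attachment x))" "\<not> primed (child_for (attachment y))"
    using child_for_attachment(3) assms(1,2) by auto
  ultimately show "{u, v} \<notin> EB \<union> ER" "u \<noteq> v"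
    using subtrees_anticomplete assms(4,5) by blast+
qed

abbreviation head_nbrs :: "'h \<Rightarrow> 'h set" where
  "head_nbrs b \<equiv> fst (attachment b) \<union> snd (attachment b)"

abbreviation child :: "'h \<Rightarrow> 'v" where
  "child b \<equiv> child_for (attachment b)"

abbreviation peers :: "'h \<Rightarrow> 'h set" where
  "peers b \<equiv> attached (attachment b)"

lemma head_nbrs_subset: "head_nbrs b \<subseteq> K"
  using attachment_subset by blast

lemma peers_disjoint_K: "peers b \<inter> K = {}"
  using attached_subset config_facts(4) by blast

lemma child_not_root: "b \<in> S \<Longrightarrow> child b \<noteq> root"
  using level_child_for[of b] level_eq[of root 0] Ls_0 by auto

lemma g_head_nbrs_in_Nup_child:
  assumes "b \<in> S"
  shows "insert (child b) (g ` head_nbrs b) \<subseteq> Nup Ls EB ER (level (child b)) (child b)"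
proof -
  have "x \<in> Nup Ls EB ER (level (child b)) (child b)" if x: "x \<in> g ` head_nbrs b" for x
  proof -
    obtain a where a: "a \<in> K" "x = g a" using x head_nbrs_subset[of b] by blast
    have "x \<in> set (Ls (level x))" "level x < level (child b)"
      using level_g_le[OF a(1)] in_layer_level level_child_for[OF assms] a(2) by auto
    moreover have "{child b, x} \<in> EB \<union> ER"
      using child_for_edge[OF assms \<open>level x < level (child b)\<close>] x by auto
    ultimately show ?thesis unfolding Nup_def by blast
  qed
  then show ?thesis unfolding Nup_def by blast
qed

lemma config_child:
  assumes "b \<in> S"
  shows "config (child b) (head_nbrs b) (peers b) g"
  unfolding config_def
proof (intro conjI)
  show "child b \<in> V" using child_for_in_V[OF assms] .
  show "clique (head_nbrs b)"
    using config_facts(5) head_nbrs_subset[of b] unfolding clique_def by blast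
  show "embeds g (head_nbrs b)"
    using embeds_mono[OF config_facts(7) head_nbrs_subset[of b]] .
  show "\<forall>a\<in>peers b. \<forall>x. adj a x \<longrightarrow> x \<in> head_nbrs b \<union> peers b"
    using attached_neighbour by blast
  show "g ` head_nbrs b \<subseteq> Nup Ls EB ER (level (child b)) (child b)"
    using g_head_nbrs_in_Nup_child[OF assms] by blast
  show "head_nbrs b \<subseteq> VH" "g ` head_nbrs b \<subseteq> X"
    using head_nbrs_subset[of b] config_facts(2,8) by blast+
  show "peers b \<subseteq> VH" using attached_subset config_facts(3) by blast
  show "head_nbrs b \<inter> peers b = {}" using head_nbrs_subset[of b] peers_disjoint_K[of b] by blast
qed

lemma config_child_in_X:
  assumes b: "b \<in> S" and X: "child b \<in> X"
  shows "config (child b) (insert (head b) (head_nbrs b)) (peers b - {head b}) (g(head b := child b))"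
  unfolding config_def
proof (intro conjI)
  define g' where "g' = g(head b := child b)"
  have h: "head b \<notin> head_nbrs b" "head b \<in> peers b"
    using head_notin_K[OF b] head_nbrs_subset[of b] head_attached[OF b] by auto
  have g'A: "\<forall>a\<in>head_nbrs b. g' a = g a" using h(1) unfolding g'_def by auto
  show "child b \<in> V" using child_for_in_V[OF b] .
  show "clique (insert (head b) (head_nbrs b))" using clique_head_attachment[OF b] .
  show "\<forall>a\<in>peers b - {head b}. \<forall>x. adj a x \<longrightarrow> x \<in> insert (head b) (head_nbrs b) \<union> (peers b - {head b})"
  proof (intro ballI allI impI)
    fix a x assume "a \<in> peers b - {head b}" "adj a x"
    then show "x \<in> insert (head b) (head_nbrs b) \<union> (peers b - {head b})"
      using attached_neighbour[of a "attachment b" x] by auto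
  qed
  have "g ` head_nbrs b \<subseteq> X" using config_facts(8) head_nbrs_subset[of b] by blast
  then show "g' ` insert (head b) (head_nbrs b) \<subseteq> X"
    using X g'A unfolding g'_def by auto
  show "g' ` insert (head b) (head_nbrs b) \<subseteq> Nup Ls EB ER (level (child b)) (child b)"
    using g_head_nbrs_in_Nup_child[OF b] g'A unfolding g'_def by auto
  have "child b \<notin> g ` head_nbrs b"
    using level_g_le level_child_for[OF b] head_nbrs_subset[of b] by fastforce
  moreover have "embeds g' (head_nbrs b)"
    using embeds_cong[OF embeds_mono[OF config_facts(7) head_nbrs_subset[of b]]] g'A by blast
  moreover have "({g' (head b), g' a} \<in> EB \<longleftrightarrow> {head b, a} \<in> EBH) \<and>
      ({g' (head b), g' a} \<in> ER \<longleftrightarrow> {head b, a} \<in> ERH)" if "a \<in> head_nbrs b" for a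
    using child_for_mirrors_head[OF b] head_nbrs_subset[of b] that g'A unfolding g'_def by auto
  ultimately show "embeds g' (insert (head b) (head_nbrs b))"
    using h(1) g'A unfolding embeds_def g'_def by (auto simp: insert_commute)
  show "insert (head b) (head_nbrs b) \<subseteq> VH"
    using head_nbrs_subset[of b] config_facts(2,3) head_in_S[OF b] by blast
  show "peers b - {head b} \<subseteq> VH" using attached_subset config_facts(3) by blast
  show "insert (head b) (head_nbrs b) \<inter> (peers b - {head b}) = {}"
    using head_nbrs_subset[of b] peers_disjoint_K[of b] by blast
qed

lemma extension_from_child:
  assumes b: "b \<in> S"
    and K': "head_nbrs b \<subseteq> K'" "K' \<union> S' = head_nbrs b \<union> peers b"
    and g': "\<forall>a\<in>head_nbrs b. g' a = g a" "\<forall>x\<in>K' - head_nbrs b. g' x = child b \<and> child b \<in> X"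
    and f: "extension (below (child b)) (child b) K' S' g' f"
  shows "extension (in_subtree (child b)) c (head_nbrs b) (peers b) g f"
proof -
  from f have f_g': "\<forall>a\<in>K'. f a = g' a" and f_embeds: "embeds f (K' \<union> S')"
    and f_X: "f ` S' \<subseteq> X" and f_below: "\<forall>y\<in>S'. below (child b) (f y)"
    and f_sep: "\<forall>y\<in>S'. \<forall>z. level z \<le> level (child b) \<longrightarrow> z \<notin> g' ` K' \<longrightarrow> {f y, z} \<notin> EB \<union> ER"
    unfolding extension_def by blast+
  have level_child: "level (child b) = Suc (level c)" using level_child_for[OF b] .
  have peer_cases: "x \<in> S' \<or> (f x = child b \<and> child b \<in> X)" if "x \<in> peers b" for x
  proof -
    have "x \<in> K' \<union> S'" "x \<notin> head_nbrs b"
      using that K'(2) head_nbrs_subset[of b] peers_disjoint_K[of b] by auto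
    then show ?thesis using g'(2) f_g' by auto
  qed
  have not_g'K': "z \<notin> g' ` K'" if "level z \<le> level c" "z \<notin> g ` head_nbrs b" for z
  proof
    assume "z \<in> g' ` K'"
    then obtain k where "k \<in> K'" "z = g' k" by blast
    then show False using that g' level_child by (cases "k \<in> head_nbrs b") auto
  qed
  have child_sep: "{child b, z} \<notin> EB \<union> ER" if "level z \<le> level c" "z \<notin> g ` head_nbrs b" for z
    using child_for_edge[OF b] that level_child by auto
  have "f y \<in> X \<and> in_subtree (child b) (f y) \<and>
      (\<forall>z. level z \<le> level c \<longrightarrow> z \<notin> g ` head_nbrs b \<longrightarrow> {f y, z} \<notin> EB \<union> ER)"
    if y: "y \<in> peers b" for y
  proof (cases "y \<in> S'")
    case True
    have "{f y, z} \<notin> EB \<union> ER" if "level z \<le> level c" "z \<notin> g ` head_nbrs b" for z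
      using f_sep True not_g'K'[OF that] that(1) level_child by simp
    moreover have "f y \<in> X" "in_subtree (child b) (f y)"
      using True f_X f_below unfolding below_def by auto
    ultimately show ?thesis by blast
  next
    case False
    then show ?thesis
      using peer_cases[OF y] child_sep in_subtree_refl[OF child_for_in_V[OF b]] by auto
  qed
  moreover have "\<forall>a\<in>head_nbrs b. f a = g a" using f_g' g'(1) K'(1) by auto
  moreover have "embeds f (head_nbrs b \<union> peers b)" using f_embeds K'(2) by simp
  ultimately show ?thesis unfolding extension_def by blast
qed

lemma extension_anticomplete_to_rest_of_K:
  assumes b: "b \<in> S" and f: "extension (in_subtree (child b)) c (head_nbrs b) (peers b) g f"
    and a: "a \<in> K - head_nbrs b" and y: "y \<in> peers b"
  shows "g a \<noteq> f y \<and> \<not> adj a y \<and> {g a, f y} \<notin> EB \<union> ER"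
proof -
  have "level (f y) \<ge> level (child b)"
    using f y unfolding extension_def in_subtree_def by blast
  then have "f y \<noteq> g a" using level_g_le a level_child_for[OF b] by fastforce
  moreover have "\<not> adj a y" using attached_neighbour_in_K[OF y] a adj_sym by blast
  moreover have "inj_on g K" using config_facts(7) unfolding embeds_def by blast
  then have "g a \<notin> g ` head_nbrs b" using a head_nbrs_subset[of b] by (auto simp: inj_on_image_mem_iff)
  then have "{f y, g a} \<notin> EB \<union> ER" using f y level_g_le a unfolding extension_def by blast
  ultimately show ?thesis by (auto simp: insert_commute)
qed

lemma extension_to_K:
  assumes b: "b \<in> S" and f: "extension (in_subtree (child b)) c (head_nbrs b) (peers b) g f"
  shows "extension (in_subtree (child b)) c K (peers b) g (\<lambda>x. if x \<in> K then g x else f x)"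
proof -
  define f' where "f' = (\<lambda>x. if x \<in> K then g x else f x)"
  have f'_peers: "f' y = f y" if "y \<in> peers b" for y
    using that peers_disjoint_K[of b] unfolding f'_def by auto
  have embeds_K: "embeds f' K"
    using embeds_cong[OF config_facts(7)] unfolding f'_def by simp
  have "f' x = f x" if "x \<in> head_nbrs b \<union> peers b" for x
    using that f f'_peers head_nbrs_subset[of b] peers_disjoint_K[of b]
    unfolding f'_def extension_def by auto
  then have embeds_A: "embeds f' (head_nbrs b \<union> peers b)"
    using embeds_cong f unfolding extension_def by blast
  have "f' x \<noteq> f' y \<and> \<not> adj x y \<and> {f' x, f' y} \<notin> EB \<union> ER"
    if "x \<in> K - (head_nbrs b \<union> peers b)" "y \<in> head_nbrs b \<union> peers b - K" for x y
    using extension_anticomplete_to_rest_of_K[OF b f, of x y] that f'_peers[of y] head_nbrs_subset[of b]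
    unfolding f'_def by auto
  with embeds_K embeds_A have "embeds f' (K \<union> (head_nbrs b \<union> peers b))"
    by (rule embeds_Un)
  moreover have "K \<union> (head_nbrs b \<union> peers b) = K \<union> peers b"
    using head_nbrs_subset[of b] by blast
  ultimately have "embeds f' (K \<union> peers b)" by simp
  moreover have "{f y, z} \<notin> EB \<union> ER" if "y \<in> peers b" "level z \<le> level c" "z \<notin> g ` K" for y z
    using f that image_mono[OF head_nbrs_subset[of b], of g] unfolding extension_def by blast
  ultimately have "extension (in_subtree (child b)) c K (peers b) g f'"
    using f f'_peers unfolding extension_def f'_def by auto
  then show ?thesis unfolding f'_def .
qed

lemma extendable_if_peers_extend:
  assumes "S \<noteq> {}"
    and F: "\<And>b. b \<in> S \<Longrightarrow> extension (in_subtree (child b)) c K (peers b) g (F (attachment b))"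
  shows "extendable c K S g"
proof -
  define f where "f x = (if x \<in> K then g x else F (attachment x) x)" for x
  have peers_iff: "x \<in> peers b \<longleftrightarrow> x \<in> S \<and> attachment x = attachment b" for b x
    unfolding attached_def by auto
  have f_F: "f x = F (attachment b) x" if "b \<in> S" "x \<in> K \<union> peers b" for b x
    using that F[OF that(1)] peers_disjoint_K[of b] peers_iff[of x b]
    unfolding f_def extension_def by auto
  have f_ext: "extension (in_subtree (child b)) c K (peers b) g f" if "b \<in> S" for b
  proof -
    have eq: "\<And>x. x \<in> K \<union> peers b \<Longrightarrow> f x = F (attachment b) x" using f_F that by blast
    have "embeds (F (attachment b)) (K \<union> peers b)"
      using F[OF that] unfolding extension_def by blast
    then have "embeds f (K \<union> peers b)" using eq by (rule embeds_cong)
    then show ?thesis using F[OF that] eq unfolding extension_def by auto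
  qed
  have "embeds f (\<Union>b\<in>S. K \<union> peers b)"
  proof (rule embeds_UN)
    fix b assume "b \<in> S"
    then show "embeds f (K \<union> peers b)"
      using f_ext unfolding extension_def by blast
  next
    fix b b' x y assume bb': "b \<in> S" "b' \<in> S" and xy: "x \<in> K \<union> peers b - (K \<union> peers b')"
      "y \<in> K \<union> peers b' - (K \<union> peers b)"
    then have x: "x \<in> S" "x \<in> peers b" and y: "y \<in> S" "y \<in> peers b'"
      and ne: "attachment x \<noteq> attachment y"
      using peers_iff by auto
    have "in_subtree (child x) (f x)" "in_subtree (child y) (f y)"
      using f_ext[OF bb'(1)] f_ext[OF bb'(2)] x y peers_iff[of x b] peers_iff[of y b']
      unfolding extension_def by auto
    then show "f x \<noteq> f y \<and> \<not> adj x y \<and> {f x, f y} \<notin> EB \<union> ER"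
      using children_for_anticomplete[OF x(1) y(1) ne] attachment_adj[OF x(1) y(1)] ne by auto
  qed
  moreover have "(\<Union>b\<in>S. K \<union> peers b) = K \<union> S"
    using assms(1) peers_iff by blast
  moreover have "f y \<in> X \<and> below c (f y) \<and>
      (\<forall>z. level z \<le> level c \<longrightarrow> z \<notin> g ` K \<longrightarrow> {f y, z} \<notin> EB \<union> ER)" if "y \<in> S" for y
  proof -
    have "y \<in> peers y" using that peers_iff by simp
    then show ?thesis
      using f_ext[OF that] below_if_in_subtree_child child_for_attachment[OF that]
      unfolding extension_def by blast
  qed
  moreover have "\<forall>a\<in>K. f a = g a" unfolding f_def by simp
  ultimately show ?thesis
    unfolding extendable_def extension_def by auto
qed

text \<open>If the child chosen for \<open>b\<close> is in \<open>X\<close>, the head of \<open>b\<close> is mapped to it and fewer vertices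
  remain; otherwise only the peers of \<open>b\<close> remain, which are fewer than \<open>S\<close> except in the excluded
  case.\<close>
lemma peers_extension:
  assumes b: "b \<in> S"
    and IH: "\<And>c' K' S' g'. card S' < card S \<Longrightarrow> config c' K' S' g' \<Longrightarrow> meets_X_below c' (card S') \<Longrightarrow>
      extendable c' K' S' g'"
    and meets: "meets_X_below c (card S)"
    and not_excluded: "child b \<notin> X \<Longrightarrow> peers b = S \<Longrightarrow> extendable (child b) (head_nbrs b) S g"
  shows "\<exists>f. extension (in_subtree (child b)) c (head_nbrs b) (peers b) g f"
proof -
  have meets_child: "meets_X_below (child b) (if child b \<in> X then card S - 1 else card S)"
    using meets_X_below_child[OF meets child_for_in_V[OF b] child_not_root[OF b] child_for_attachment(2)[OF b]] .
  have "head_nbrs b \<subseteq> K" "peers b \<subseteq> S" "head b \<in> peers b" "head b \<notin> head_nbrs b"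
    using head_nbrs_subset[of b] attached_subset head_attached[OF b] head_notin_K[OF b] by auto
  show ?thesis
  proof (cases "child b \<in> X")
    case True
    define K' where "K' = insert (head b) (head_nbrs b)"
    define S' where "S' = peers b - {head b}"
    define g' where "g' = g(head b := child b)"
    have "S' \<subset> S" unfolding S'_def using \<open>peers b \<subseteq> S\<close> \<open>head b \<in> peers b\<close> by blast
    then have "card S' < card S" using psubset_card_mono[OF finite_S] by blast
    moreover have "config (child b) K' S' g'"
      unfolding K'_def S'_def g'_def using config_child_in_X[OF b True] .
    moreover have "meets_X_below (child b) (card S')"
      using meets_child True \<open>card S' < card S\<close> by (auto intro: meets_X_below_mono)
    ultimately obtain f where "extension (below (child b)) (child b) K' S' g' f"
      using IH unfolding extendable_def by blast
    moreover have "head_nbrs b \<subseteq> K'" "K' \<union> S' = head_nbrs b \<union> peers b"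
      "\<forall>a\<in>head_nbrs b. g' a = g a" "\<forall>x\<in>K' - head_nbrs b. g' x = child b \<and> child b \<in> X"
      unfolding K'_def S'_def g'_def using True \<open>head b \<in> peers b\<close> \<open>head b \<notin> head_nbrs b\<close> by auto
    ultimately show ?thesis
      using extension_from_child[OF b] by blast
  next
    case False
    have "extendable (child b) (head_nbrs b) (peers b) g"
    proof (cases "peers b = S")
      case False
      then have "card (peers b) < card S"
        using \<open>peers b \<subseteq> S\<close> finite_S by (meson psubsetI psubset_card_mono)
      moreover have "meets_X_below (child b) (card (peers b))"
        using meets_child \<open>child b \<notin> X\<close> calculation by (auto intro: meets_X_below_mono)
      ultimately show ?thesis using IH config_child[OF b] by blast
    qed (use not_excluded False in simp)
    then obtain f where "extension (below (child b)) (child b) (head_nbrs b) (peers b) g f"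
      unfolding extendable_def by blast
    then show ?thesis
      using extension_from_child[OF b, of "head_nbrs b" "peers b" g f] by auto
  qed
qed

lemma bad_child_if_not_extendable:
  assumes IH: "\<And>c' K' S' g'. card S' < card S \<Longrightarrow> config c' K' S' g' \<Longrightarrow> meets_X_below c' (card S') \<Longrightarrow>
      extendable c' K' S' g'"
    and meets: "meets_X_below c (card S)" and bad: "\<not> extendable c K S g"
  shows "\<exists>w K'. w \<in> V \<and> w \<noteq> root \<and> par w = c \<and> w \<notin> X \<and>
    config w K' S g \<and> meets_X_below w (card S) \<and> \<not> extendable w K' S g"
proof (rule ccontr)
  assume no_bad_child: "\<not> ?thesis"
  have "\<exists>f. extension (in_subtree (child b)) c (head_nbrs b) (peers b) g f" if b: "b \<in> S" for b
  proof (rule peers_extension[OF b IH meets])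
    assume "child b \<notin> X" "peers b = S"
    then show "extendable (child b) (head_nbrs b) S g"
      using no_bad_child config_child[OF b] child_for_in_V[OF b] child_not_root[OF b]
        child_for_attachment(2)[OF b] meets_X_below_child[OF meets] by fastforce
  qed
  then have "\<forall>l\<in>attachment ` S. \<exists>f. extension (in_subtree (child_for l)) c (fst l \<union> snd l) (attached l) g f"
    by blast
  then obtain F where F: "\<forall>l\<in>attachment ` S.
      extension (in_subtree (child_for l)) c (fst l \<union> snd l) (attached l) g (F l)"
    by (metis bchoice)
  have "extendable c K S g"
  proof (rule extendable_if_peers_extend[where F = "\<lambda>l x. if x \<in> K then g x else F l x"])
    show "S \<noteq> {}" using bad extendable_empty by blast
    fix b assume "b \<in> S"
    then show "extension (in_subtree (child b)) c K (peers b) g (\<lambda>x. if x \<in> K then g x else F (attachment b) x)"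
      using extension_to_K F by simp
  qed
  then show False using bad by blast
qed

end

lemma config_extendable: "config c K S g \<Longrightarrow> meets_X_below c (card S) \<Longrightarrow> extendable c K S g"
proof (induction "card S" arbitrary: c K S g rule: less_induct)
  case less
  show ?case
  proof (rule ccontr)
    assume bad: "\<not> extendable c K S g"
    then have "S \<noteq> {}" using extendable_empty[OF less.prems(1)] by blast
    then have "card S \<ge> 1" using finite_S[OF less.prems(1)] by (simp add: Suc_le_eq card_gt_0_iff)
    define Q where "Q y \<longleftrightarrow> config (fst y) (snd y) S g \<and> meets_X_below (fst y) (card S) \<and>
      \<not> extendable (fst y) (snd y) S g" for y
    have "\<exists>y. Q y \<and> fst y \<in> V \<and> fst y \<noteq> root \<and> par (fst y) = fst x \<and> fst y \<notin> X" if "Q x" for x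
      using bad_child_if_not_extendable[of "fst x" "snd x" S g] less.hyps that unfolding Q_def by force
    moreover have "Q (c, K)" unfolding Q_def using less.prems bad by simp
    ultimately obtain p where "downward_path V root par c p" "\<forall>k. p (Suc k) \<notin> X"
      using downward_path_iterate[of Q fst V root par X "(c, K)"] by auto
    then show False
      using not_meets_X_below_if_avoiding less.prems(2) \<open>card S \<ge> 1\<close> by blast
  qed
qed

lemma short_downward_path:
  assumes u: "u \<in> V" and H_free: "H_free_on VH EBH ERH X EB ER"
  shows "\<exists>p. downward_path V root par u p \<and> finite (range p \<inter> X) \<and> card (range p \<inter> X) \<le> card VH - 1"
proof (rule ccontr)
  assume "\<not> ?thesis"
  then have meets: "meets_X_below u (if u \<in> X then card VH - 1 else Suc (card VH - 1))"
    by (intro meets_X_below_initial) blast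
  have no_copy: "\<not> contains_induced VH EBH ERH X EB ER"
    using H_free unfolding H_free_on_def .
  then have "VH \<noteq> {}" unfolding contains_induced_def by auto
  then obtain v0 where v0: "v0 \<in> VH" by blast
  have u_Nup: "u \<in> Nup Ls EB ER (level u) u" unfolding Nup_def by simp
  obtain K S where KS: "config u K S (\<lambda>_. u)" "K \<union> S = VH" "meets_X_below u (card S)"
  proof (cases "u \<in> X")
    case True
    have "config u {v0} (VH - {v0}) (\<lambda>_. u)"
      using u v0 True u_Nup adj_H_in_VH unfolding config_def embeds_def clique_def by auto
    moreover have "card (VH - {v0}) = card VH - 1" using v0 finite_VG by simp
    ultimately show thesis using that[of "{v0}" "VH - {v0}"] meets True v0 by auto
  next
    case False
    have "config u {} VH (\<lambda>_. u)"
      using u adj_H_in_VH unfolding config_def embeds_def clique_def by auto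
    moreover have "Suc (card VH - 1) = card VH" using \<open>VH \<noteq> {}\<close> finite_VG by (simp add: card_gt_0_iff)
    ultimately show thesis using that[of "{}" VH] meets False by auto
  qed
  then show False
    using config_extendable contains_induced_if_extendable no_copy by blast
qed

end

theorem lemma4p11:
  fixes t :: nat
    and V :: "'v set" and root :: 'v and Ls :: "nat \<Rightarrow> 'v list" and par :: "'v \<Rightarrow> 'v"
    and lab :: "'v \<Rightarrow> 'v set \<times> 'v set \<times> bool" and EB ER :: "'v set set"
    and VH :: "'h set" and EBH ERH :: "'h set set"
    and X :: "'v set" and u :: 'v
  assumes "t \<ge> 1"
    and "Gt_construction t V root Ls par lab EB ER"
    and "trigraph VH EBH ERH" and "finite VH"
    and "chordal_trigraph VH EBH ERH"
    and "clique_number_le VH (EBH \<union> ERH) (t + 1)"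
    and "triangle_free VH EBH"
    and "X \<subseteq> V"
    and "H_free_on VH EBH ERH X EB ER"
    and "u \<in> V"
  shows "\<exists>p. downward_path V root par u p \<and>
             finite (range p \<inter> X) \<and> card (range p \<inter> X) \<le> card VH - 1"
proof -
  interpret greedy_embedding t V root Ls par lab EB ER VH EBH ERH X
    by unfold_locales (use assms in \<open>auto simp: chordal_trigraph_def\<close>)
  show ?thesis using short_downward_path assms(9,10) by blast
qed

end
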